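(* Let $u^{\mathrm{in}}\in L^1(\mathbb{R}_+)\cap L^\infty(\mathbb{R}_+)$ with $u^{\mathrm{in}}\ge 0$ a.e. and $\int_{\mathbb{R}_+}x\,u^{\mathrm{in}}(x)\,\mathrm{d}x<+\infty$. Let $u$ be a (strong) solution of $$\partial_t u(t,x)=\Big(\int_{\mathbb{R}_+}u(t,z)\,\mathrm{d}z\Big)\partial_x^2u(t,x),\qquad u(t,0)=0,\qquad u(0,x)=u^{\mathrm{in}}(x).$$ Then the first spatial moment is conserved: for all $t\in\mathbb{R}_+$, $\int_{\mathbb{R}_+}x\,u(t,x)\,\mathrm{d}x=\int_{\mathbb{R}_+}x\,u^{\mathrm{in}}(x)\,\mathrm{d}x$.
   Context: $\mathbb{R}_+=[0,+\infty)$; the equation holds for $t>0$, $x>0$. *)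

theory Defs
  imports "HOL-Analysis.Analysis"
begin

text \<open>Functions of time and space are curried: u t x. The half-line R_+ is {0..}.\<close>

definition mass :: "(real \<Rightarrow> real) \<Rightarrow> real" where
  "mass f = (LINT z:{0..}|lborel. f z)"

definition strong_solution ::
  "(real \<Rightarrow> real) \<Rightarrow> (real \<Rightarrow> real \<Rightarrow> real) \<Rightarrow> bool" where
  "strong_solution uin u \<longleftrightarrow>
     (\<forall>x\<ge>0. u 0 x = uin x) \<and>
     (\<forall>t\<ge>0. set_integrable lborel {0..} (u t)) \<and>
     (\<forall>t\<ge>0. ((\<lambda>s. LINT x:{0..}|lborel. \<bar>u s x - u t x\<bar>) \<longlongrightarrow> 0) (at t within {0..})) \<and>
     (\<forall>T\<ge>0. \<exists>C. \<forall>t\<in>{0..T}. \<forall>x\<ge>0. \<bar>u t x\<bar> \<le> C) \<and>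
     (\<exists>ut ux uxx.
        (\<forall>t>0. \<forall>x\<ge>0.
           ((\<lambda>s. u s x) has_real_derivative ut t x) (at t) \<and>
           ((\<lambda>y. u t y) has_real_derivative ux t x) (at x within {0..}) \<and>
           ((\<lambda>y. ux t y) has_real_derivative uxx t x) (at x within {0..})) \<and>
        continuous_on ({0<..} \<times> {0..}) (\<lambda>(t, x). u t x) \<and>
        continuous_on ({0<..} \<times> {0..}) (\<lambda>(t, x). ut t x) \<and>
        continuous_on ({0<..} \<times> {0..}) (\<lambda>(t, x). ux t x) \<and>
        continuous_on ({0<..} \<times> {0..}) (\<lambda>(t, x). uxx t x) \<and>
        (\<forall>t>0. u t 0 = 0) \<and>
        (\<forall>t>0. \<forall>x>0. ut t x = mass (u t) * uxx t x))"

end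

theory Submission
  imports Defs "HOL-Probability.Levy"
begin

text \<open>Write \<open>m(t) = \<integral> u(t,x) dx\<close> for the mass, the diffusion coefficient of the equation.
  Testing the equation with \<open>x \<chi>\<^sub>L(x)\<close>, where \<open>\<chi>\<^sub>L(x) = (1 - x\<^sup>2/L\<^sup>2)\<^sup>3\<close>, and integrating
  by parts twice leaves no boundary terms because \<open>u(t,0) = 0\<close>, so the truncated first moment
  moves by at most \<open>t sup|m| sup\<parallel>u\<parallel>\<^sub>1 O(1/L)\<close>; when \<open>u \<ge> 0\<close>, monotone convergence in \<open>L\<close> gives
  conservation of the first moment.

  Nonnegativity of \<open>u(t)\<close> holds as long as \<open>m \<ge> 0\<close> on \<open>[0,t]\<close>: the same computation with the
  convex penalty \<open>max(0,-u)\<^sup>3\<close> shows that its truncated integral, which vanishes initially, can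
  only grow by \<open>O(1/L\<^sup>2)\<close>. If the mass ever became negative, it would first vanish at some
  \<open>r\<^sub>0 > 0\<close>; then \<open>u(r\<^sub>0) \<ge> 0\<close> has zero mass, hence vanishes, and conservation up to \<open>r\<^sub>0\<close> makes
  the first moment of \<open>uin\<close> vanish, i.e. \<open>uin = 0\<close>. For zero data, every sine transform
  \<open>g\<^sub>k(t) = \<integral> sin(kx) u(t,x) dx\<close> solves \<open>g\<^sub>k' = -k\<^sup>2 m(t) g\<^sub>k\<close>, \<open>g\<^sub>k(0) = 0\<close>, so it vanishes,
  and the sine transform is injective by Levy's uniqueness theorem for characteristic functions.\<close>

section \<open>Test functions\<close>

definition cutoff :: "real \<Rightarrow> real \<Rightarrow> real" where
  "cutoff L x = (1 - (x / L)\<^sup>2) ^ 3"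

definition cutoff' :: "real \<Rightarrow> real \<Rightarrow> real" where
  "cutoff' L x = - 6 * x / L\<^sup>2 * (1 - (x / L)\<^sup>2)\<^sup>2"

definition cutoff'' :: "real \<Rightarrow> real \<Rightarrow> real" where
  "cutoff'' L x = 24 * x\<^sup>2 / L ^ 4 * (1 - (x / L)\<^sup>2) - 6 / L\<^sup>2 * (1 - (x / L)\<^sup>2)\<^sup>2"

lemma has_real_derivative_cutoff: "(cutoff L has_real_derivative cutoff' L x) (at x)"
  unfolding cutoff_def cutoff'_def divide_inverse
  by (auto intro!: derivative_eq_intros simp: power2_eq_square algebra_simps)

lemma has_real_derivative_cutoff': "(cutoff' L has_real_derivative cutoff'' L x) (at x)"
  unfolding cutoff'_def cutoff''_def divide_inverse
  by (auto intro!: derivative_eq_intros simp: power2_eq_square power4_eq_xxxx algebra_simps)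

lemma continuous_on_cutoff [continuous_intros]:
  "continuous_on S (cutoff L)" "continuous_on S (cutoff' L)" "continuous_on S (cutoff'' L)"
  unfolding cutoff_def cutoff'_def cutoff''_def divide_inverse by (auto intro!: continuous_intros)

lemma cutoff_at_end: "L \<noteq> 0 \<Longrightarrow> cutoff L L = 0" "L \<noteq> 0 \<Longrightarrow> cutoff' L L = 0"
  by (simp_all add: cutoff_def cutoff'_def)

lemma cutoff_bounds:
  assumes "0 \<le> x" "x \<le> L" "0 < L"
  shows "0 \<le> cutoff L x" "cutoff L x \<le> 1" "\<bar>cutoff' L x\<bar> \<le> 6 / L" "\<bar>cutoff'' L x\<bar> \<le> 30 / L\<^sup>2"
proof -
  define w where "w = 1 - (x / L)\<^sup>2"
  have "(x / L)\<^sup>2 \<le> 1" using assms by (simp add: power_le_one)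
  then have w: "0 \<le> w" "w \<le> 1" by (auto simp: w_def)
  have xL: "x / L \<le> 1" using assms by simp
  show "0 \<le> cutoff L x" "cutoff L x \<le> 1"
    using w by (simp_all add: cutoff_def w_def[symmetric] power_le_one)
  have "\<bar>cutoff' L x\<bar> = 6 / L * (x / L) * w\<^sup>2"
    using assms unfolding cutoff'_def w_def[symmetric] by (simp add: abs_mult power2_eq_square)
  also have "\<dots> \<le> 6 / L * 1 * 1"
    using assms w xL by (intro mult_mono) (auto simp: power_le_one)
  finally show "\<bar>cutoff' L x\<bar> \<le> 6 / L" by simp
  have "\<bar>cutoff'' L x\<bar> \<le> 24 / L\<^sup>2 * (x / L)\<^sup>2 * w + 6 / L\<^sup>2 * w\<^sup>2"
    using assms w unfolding cutoff''_def w_def[symmetric]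
    by (auto simp: power_divide abs_mult power2_eq_square power4_eq_xxxx
          intro!: order.trans[OF abs_triangle_ineq4])
  also have "\<dots> \<le> 24 / L\<^sup>2 * 1 * 1 + 6 / L\<^sup>2 * 1"
    using assms w \<open>(x / L)\<^sup>2 \<le> 1\<close> by (intro add_mono mult_mono) (auto simp: power_le_one)
  finally show "\<bar>cutoff'' L x\<bar> \<le> 30 / L\<^sup>2" by simp
qed

lemma cutoff_mono:
  assumes "0 \<le> x" "x \<le> L" "L \<le> L'"
  shows "cutoff L x \<le> cutoff L' x"
proof (cases "x = 0")
  case False
  then have "x / L' \<le> x / L" "0 \<le> x / L'" "x / L \<le> 1" using assms by (auto intro: divide_left_mono)
  then have "(x / L')\<^sup>2 \<le> (x / L)\<^sup>2" "(x / L)\<^sup>2 \<le> 1" by (auto intro: power_mono simp: power_le_one)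
  then show ?thesis unfolding cutoff_def by (intro power_mono) auto
qed (simp add: cutoff_def)

lemma cutoff_ge_on_half:
  assumes "0 \<le> x" "2 * x \<le> L"
  shows "27 / 64 \<le> cutoff L x"
proof (cases "x = 0")
  case False
  then have "x / L \<le> 1 / 2" "0 \<le> x / L" using assms by (auto simp: field_simps)
  then have "(x / L)\<^sup>2 \<le> (1 / 2)\<^sup>2" by (intro power_mono)
  then have "(3 / 4) ^ 3 \<le> (1 - (x / L)\<^sup>2) ^ 3" by (intro power_mono) (auto simp: power2_eq_square)
  then show ?thesis by (simp add: cutoff_def power_divide)
qed (simp add: cutoff_def)

lemma cutoff_tendsto: "((\<lambda>L. cutoff L x) \<longlongrightarrow> 1) at_top"
proof -
  have "((\<lambda>L. (1 - (x * inverse L)\<^sup>2) ^ 3) \<longlongrightarrow> (1 - (x * 0)\<^sup>2) ^ 3) at_top"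
    by (intro tendsto_intros tendsto_inverse_0_at_top filterlim_ident)
  then show ?thesis by (simp add: cutoff_def divide_inverse)
qed

lemma moment_cutoff''_bound:
  assumes "0 \<le> x" "x \<le> L" "0 < L"
  shows "\<bar>2 * cutoff' L x + x * cutoff'' L x\<bar> \<le> 42 / L"
proof -
  note b = cutoff_bounds[OF assms]
  have "\<bar>2 * cutoff' L x + x * cutoff'' L x\<bar> \<le> 2 * \<bar>cutoff' L x\<bar> + x * \<bar>cutoff'' L x\<bar>"
    using assms abs_triangle_ineq[of "2 * cutoff' L x" "x * cutoff'' L x"] by (simp add: abs_mult)
  also have "\<dots> \<le> 2 * \<bar>cutoff' L x\<bar> + L * \<bar>cutoff'' L x\<bar>"
    using assms by (intro add_left_mono mult_right_mono) auto
  also have "\<dots> \<le> 2 * (6 / L) + L * (30 / L\<^sup>2)"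
    using b assms by (intro add_mono mult_left_mono) auto
  also have "\<dots> = 42 / L" using assms by (simp add: power2_eq_square field_simps)
  finally show ?thesis .
qed

definition sine_cutoff :: "real \<Rightarrow> real \<Rightarrow> real \<Rightarrow> real" where
  "sine_cutoff k L x = sin (k * x) * cutoff L x"

definition sine_cutoff' :: "real \<Rightarrow> real \<Rightarrow> real \<Rightarrow> real" where
  "sine_cutoff' k L x = k * cos (k * x) * cutoff L x + sin (k * x) * cutoff' L x"

definition sine_cutoff'' :: "real \<Rightarrow> real \<Rightarrow> real \<Rightarrow> real" where
  "sine_cutoff'' k L x =
     - (k\<^sup>2 * sin (k * x) * cutoff L x) + 2 * k * cos (k * x) * cutoff' L x + sin (k * x) * cutoff'' L x"

lemma has_real_derivative_sine_cutoff:
  "(sine_cutoff k L has_real_derivative sine_cutoff' k L x) (at x)"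
  "(sine_cutoff' k L has_real_derivative sine_cutoff'' k L x) (at x)"
  unfolding sine_cutoff_def[abs_def] sine_cutoff'_def[abs_def] sine_cutoff''_def
  by (auto intro!: derivative_eq_intros has_real_derivative_cutoff has_real_derivative_cutoff'
      simp: algebra_simps power2_eq_square)

lemma continuous_on_sine_cutoff [continuous_intros]:
  "continuous_on S (sine_cutoff k L)" "continuous_on S (sine_cutoff'' k L)"
  unfolding sine_cutoff_def[abs_def] sine_cutoff''_def[abs_def] by (auto intro!: continuous_intros)

lemma sine_cutoff_at_ends:
  "sine_cutoff k L 0 = 0" "L \<noteq> 0 \<Longrightarrow> sine_cutoff k L L = 0" "L \<noteq> 0 \<Longrightarrow> sine_cutoff' k L L = 0"
  by (simp_all add: sine_cutoff_def sine_cutoff'_def cutoff_at_end)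

lemma sine_cutoff_bounds:
  assumes "0 \<le> x" "x \<le> L" "1 \<le> L"
  shows "\<bar>sine_cutoff'' k L x + k\<^sup>2 * sine_cutoff k L x\<bar> \<le> (12 * \<bar>k\<bar> + 30) / L"
    and "\<bar>sine_cutoff'' k L x\<bar> \<le> k\<^sup>2 + 12 * \<bar>k\<bar> + 30"
proof -
  note b = cutoff_bounds[of x L]
  have c: "0 \<le> cutoff L x" "cutoff L x \<le> 1" using b assms by auto
  have s: "\<bar>sine_cutoff k L x\<bar> \<le> 1"
    unfolding sine_cutoff_def abs_mult using c by (intro mult_le_one) auto
  have "\<bar>sine_cutoff'' k L x + k\<^sup>2 * sine_cutoff k L x\<bar>
      \<le> 2 * \<bar>k\<bar> * \<bar>cos (k * x)\<bar> * \<bar>cutoff' L x\<bar> + \<bar>sin (k * x)\<bar> * \<bar>cutoff'' L x\<bar>"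
    unfolding sine_cutoff''_def sine_cutoff_def
    using abs_triangle_ineq[of "2 * k * cos (k * x) * cutoff' L x" "sin (k * x) * cutoff'' L x"]
    by (simp add: abs_mult)
  also have "\<dots> \<le> 2 * \<bar>k\<bar> * 1 * (6 / L) + 1 * (30 / L\<^sup>2)"
    using b assms by (intro add_mono mult_mono) auto
  also have "\<dots> \<le> (12 * \<bar>k\<bar> + 30) / L"
  proof -
    have "30 / L\<^sup>2 \<le> 30 / L" using assms by (intro divide_left_mono) (auto simp: power2_eq_square)
    then show ?thesis by (simp add: add_divide_distrib)
  qed
  finally show d: "\<bar>sine_cutoff'' k L x + k\<^sup>2 * sine_cutoff k L x\<bar> \<le> (12 * \<bar>k\<bar> + 30) / L" .
  have "\<bar>k\<^sup>2 * sine_cutoff k L x\<bar> \<le> k\<^sup>2" using s by (simp add: abs_mult mult_left_le)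
  moreover have "(12 * \<bar>k\<bar> + 30) / L \<le> 12 * \<bar>k\<bar> + 30"
    using assms by (simp add: divide_le_eq mult_le_cancel_left1)
  ultimately show "\<bar>sine_cutoff'' k L x\<bar> \<le> k\<^sup>2 + 12 * \<bar>k\<bar> + 30"
    using d by linarith
qed

lemma has_real_derivative_neg_part_power:
  fixes v :: real
  assumes "n \<ge> 1"
  shows "((\<lambda>v. max 0 (- v) ^ Suc n) has_real_derivative - real (Suc n) * max 0 (- v) ^ n) (at v)"
proof -
  consider "v < 0" | "v > 0" | "v = 0" by linarith
  then show ?thesis
  proof cases
    case 1
    have "((\<lambda>v. (- v) ^ Suc n) has_real_derivative - real (Suc n) * (- v) ^ n) (at v)"
      by (rule DERIV_cong[OF DERIV_power_Suc[OF DERIV_minus[OF DERIV_ident]]]) (simp add: algebra_simps)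
    then have "((\<lambda>v. max 0 (- v) ^ Suc n) has_real_derivative - real (Suc n) * (- v) ^ n) (at v)"
      by (rule has_field_derivative_transform_within_open[where S = "{..<0}"]) (use 1 in auto)
    moreover have "max 0 (- v) = - v" using 1 by simp
    ultimately show ?thesis by simp
  next
    case 2
    have "((\<lambda>v. 0) has_real_derivative 0) (at v)" by simp
    then have "((\<lambda>v. max 0 (- v) ^ Suc n) has_real_derivative 0) (at v)"
      by (rule has_field_derivative_transform_within_open[where S = "{0<..}"]) (use 2 in auto)
    moreover have "- real (Suc n) * max 0 (- v) ^ n = 0" using 2 assms by simp
    ultimately show ?thesis by metis
  next
    case 3
    have "((\<lambda>h::real. max 0 (- h) ^ Suc n / h) \<longlongrightarrow> 0) (at 0)"
    proof (rule Lim_null_comparison)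
      have "\<bar>max 0 (- h) ^ Suc n / h\<bar> \<le> \<bar>h\<bar> ^ n" for h :: real
      proof (cases "h = 0")
        case False
        have "max 0 (- h) ^ Suc n \<le> \<bar>h\<bar> ^ Suc n" by (intro power_mono) auto
        then show ?thesis using False by (simp add: abs_divide divide_le_eq mult.commute)
      qed simp
      then show "\<forall>\<^sub>F h in at 0. norm (max 0 (- h) ^ Suc n / h) \<le> \<bar>h\<bar> ^ n" by simp
      show "((\<lambda>h. \<bar>h\<bar> ^ n) \<longlongrightarrow> 0) (at (0::real))"
        using assms by (auto intro!: tendsto_eq_intros)
    qed
    then show ?thesis using 3 assms by (simp add: DERIV_def power_0_left)
  qed
qed

definition neg_cube :: "real \<Rightarrow> real" where
  "neg_cube v = max 0 (- v) ^ 3"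

lemma has_real_derivative_neg_cube:
  "(neg_cube has_real_derivative - 3 * max 0 (- v) ^ 2) (at v)"
  "((\<lambda>v. - 3 * max 0 (- v) ^ 2) has_real_derivative 6 * max 0 (- v)) (at v)"
proof -
  show "(neg_cube has_real_derivative - 3 * max 0 (- v) ^ 2) (at v)"
    using has_real_derivative_neg_part_power[of 2 v] by (simp add: neg_cube_def[abs_def] numeral_eq_Suc)
  show "((\<lambda>v. - 3 * max 0 (- v) ^ 2) has_real_derivative 6 * max 0 (- v)) (at v)"
    using DERIV_cmult[OF has_real_derivative_neg_part_power[of 1 v], of "- 3"]
    by (simp add: numeral_eq_Suc)
qed

lemma continuous_on_neg_cube [continuous_intros]: "continuous_on S neg_cube"
  by (simp add: neg_cube_def continuous_intros)

lemma neg_cube_nonneg: "neg_cube v \<ge> 0"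
  by (simp add: neg_cube_def)

lemma neg_cube_eq_0_iff: "neg_cube v = 0 \<longleftrightarrow> v \<ge> 0"
  by (auto simp: neg_cube_def max_def)

lemma neg_cube_lipschitz:
  assumes "\<bar>a\<bar> \<le> C" "\<bar>b\<bar> \<le> C"
  shows "\<bar>neg_cube a - neg_cube b\<bar> \<le> 3 * C\<^sup>2 * \<bar>a - b\<bar>"
proof -
  define p q where "p = max 0 (- a)" and "q = max 0 (- b)"
  have p: "0 \<le> p" "p \<le> C" and q: "0 \<le> q" "q \<le> C" and pq: "\<bar>p - q\<bar> \<le> \<bar>a - b\<bar>"
    using assms by (auto simp: p_def q_def max_def)
  have "neg_cube a - neg_cube b = (p - q) * (p\<^sup>2 + p * q + q\<^sup>2)"
    by (simp add: neg_cube_def p_def[symmetric] q_def[symmetric] power2_eq_square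
        power3_eq_cube algebra_simps)
  then have "\<bar>neg_cube a - neg_cube b\<bar> = \<bar>p - q\<bar> * (p\<^sup>2 + p * q + q\<^sup>2)"
    using p q by (simp add: abs_mult)
  also have "\<dots> \<le> \<bar>a - b\<bar> * (C\<^sup>2 + C * C + C\<^sup>2)"
    using p q pq by (intro mult_mono add_mono power_mono) auto
  finally show ?thesis by (simp add: power2_eq_square algebra_simps)
qed

lemma lipschitz_on_neg_cube: "(3 * C\<^sup>2)-lipschitz_on {-C..C} neg_cube"
  by (rule lipschitz_onI) (auto simp: dist_real_def intro: neg_cube_lipschitz)

lemma nonpos_if_le_const_over:
  fixes Z K L\<^sub>0 :: real
  assumes "\<And>L. L \<ge> L\<^sub>0 \<Longrightarrow> Z \<le> K / L"
  shows "Z \<le> 0"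
proof (rule LIMSEQ_le_const[OF lim_const_over_n[of K]])
  show "\<exists>N. \<forall>n\<ge>N. Z \<le> K / real n"
    by (rule exI[of _ "nat \<lceil>L\<^sub>0\<rceil>"]) (auto intro!: assms simp: nat_le_iff ceiling_le_iff)
qed

lemma le_at_left_endpoint:
  fixes f g :: "real \<Rightarrow> real"
  assumes "a < b" "continuous_on {a..b} f" "continuous_on {a..b} g"
    and "\<And>x. a < x \<Longrightarrow> x \<le> b \<Longrightarrow> f x \<le> g x"
  shows "f a \<le> g a"
proof -
  have "continuous_on (closure {a<..b}) (\<lambda>x. f x - g x)"
    using assms by (simp add: closure_greaterThanAtMost continuous_intros)
  from continuous_le_on_closure[OF this, of a 0] show ?thesis
    using assms by (simp add: closure_greaterThanAtMost)
qed

lemma vanishes_if_linear_integral_equation: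
  fixes m g :: "real \<Rightarrow> real"
  assumes "0 \<le> t" "continuous_on {0..t} m" "continuous_on {0..t} g"
    and eq: "\<And>b. b \<in> {0..t} \<Longrightarrow> g b = c * integral {0..b} (\<lambda>r. m r * g r)"
  shows "g t = 0"
proof -
  define I where "I b = integral {0..b} (\<lambda>r. m r * g r)" for b
  define \<tau> where "\<tau> b = integral {0..b} m" for b
  have "((\<lambda>b. I b * exp (- c * \<tau> b)) has_real_derivative 0) (at b within {0..t})"
    if b: "b \<in> {0..t}" for b
  proof -
    have "(I has_real_derivative m b * g b) (at b within {0..t})"
      unfolding I_def using assms by (intro integral_has_real_derivative b continuous_intros)
    moreover have "(\<tau> has_real_derivative m b) (at b within {0..t})"
      unfolding \<tau>_def using assms by (intro integral_has_real_derivative b)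
    moreover have "g b = c * I b" using eq[OF b] by (simp add: I_def)
    ultimately show ?thesis by (auto intro!: derivative_eq_intros simp: algebra_simps)
  qed
  then obtain k where "\<And>b. b \<in> {0..t} \<Longrightarrow> I b * exp (- c * \<tau> b) = k"
    using has_field_derivative_zero_constant[of "{0..t}" "\<lambda>b. I b * exp (- c * \<tau> b)"] by auto
  from this[of t] this[of 0] have "I t = 0" using assms(1) by (simp add: I_def)
  then show ?thesis using eq[of t] assms(1) by (simp add: I_def)
qed

lemma first_zero_before_negative:
  fixes m :: "real \<Rightarrow> real"
  assumes "continuous_on {0..t} m" "m 0 > 0" "r \<in> {0..t}" "m r < 0"
  obtains r\<^sub>0 where "0 < r\<^sub>0" "r\<^sub>0 \<le> t" "m r\<^sub>0 = 0" "\<And>r. r \<in> {0..r\<^sub>0} \<Longrightarrow> m r \<ge> 0"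
proof -
  define Z where "Z = {x \<in> {0..t}. m x = 0}"
  have m_cont: "continuous_on {0..x} m" if "x \<le> t" for x
    using assms(1) by (rule continuous_on_subset) (use that in auto)
  obtain x where "0 \<le> x" "x \<le> r" "m x = 0"
    using IVT2'[of m r 0 0] assms m_cont[of r] by auto
  then have "x \<in> Z" using assms(3) by (simp add: Z_def)
  then have "Z \<noteq> {}" by blast
  moreover have "bdd_below Z" by (auto simp: Z_def intro: bdd_belowI[of _ 0])
  moreover have "closed Z"
    unfolding Z_def by (rule continuous_closed_preimage_constant[OF assms(1)]) simp
  ultimately have "Inf Z \<in> Z" by (rule closed_contains_Inf)
  then have r\<^sub>0: "0 \<le> Inf Z" "Inf Z \<le> t" "m (Inf Z) = 0" by (auto simp: Z_def)
  have "m x \<ge> 0" if x: "x \<in> {0..Inf Z}" for x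
  proof (rule ccontr)
    assume "\<not> m x \<ge> 0"
    then obtain y where "0 \<le> y" "y \<le> x" "m y = 0"
      using IVT2'[of m x 0 0] assms(2) x r\<^sub>0 m_cont[of x] \<open>\<not> m x \<ge> 0\<close> by auto
    moreover from this have "y \<in> Z" using x r\<^sub>0 by (auto simp: Z_def)
    then have "Inf Z \<le> y" by (simp add: cInf_lower \<open>bdd_below Z\<close>)
    ultimately show False using x \<open>\<not> m x \<ge> 0\<close> by (cases "y = x") auto
  qed
  moreover have "0 < Inf Z" using r\<^sub>0 assms(2) by (cases "Inf Z = 0") auto
  ultimately show ?thesis using r\<^sub>0 that by blast
qed

lemma continuous_on_time_slice:
  fixes f :: "real \<Rightarrow> real \<Rightarrow> real"
  assumes "continuous_on ({0<..} \<times> {0..}) (\<lambda>(t, x). f t x)" "0 < t"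
  shows "continuous_on {0..} (f t)"
proof -
  have "continuous_on {0..} ((\<lambda>(t, x). f t x) \<circ> (\<lambda>x. (t, x)))"
    using assms by (intro continuous_on_compose continuous_intros) (auto elim: continuous_on_subset)
  then show ?thesis by (simp add: o_def)
qed

lemma continuous_on_rectangle:
  fixes f :: "real \<Rightarrow> real \<Rightarrow> real"
  assumes "continuous_on ({0<..} \<times> {0..}) (\<lambda>(t, x). f t x)" "0 < a"
  shows "continuous_on ({a..b} \<times> {0..L}) (\<lambda>(t, x). f t x)"
  using assms(1) by (rule continuous_on_subset) (use assms(2) in auto)

lemma integral_increment_eq_integral_time_derivative:
  fixes F F\<^sub>t :: "real \<Rightarrow> real \<Rightarrow> real"
  assumes "a \<le> b"
    and deriv: "\<And>s x. s \<in> {a..b} \<Longrightarrow> x \<in> {c..d} \<Longrightarrow>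
                  ((\<lambda>s. F s x) has_real_derivative F\<^sub>t s x) (at s within {a..b})"
    and cont: "continuous_on ({a..b} \<times> {c..d}) (\<lambda>(s, x). F\<^sub>t s x)"
  shows "(\<lambda>s. integral {c..d} (F\<^sub>t s)) integrable_on {a..b}"
    and "integral {c..d} (\<lambda>x. F b x - F a x) = integral {a..b} (\<lambda>s. integral {c..d} (F\<^sub>t s))"
proof -
  show "(\<lambda>s. integral {c..d} (F\<^sub>t s)) integrable_on {a..b}"
    using integral_continuous_on_param[of "{a..b}" c d F\<^sub>t] cont
    by (intro integrable_continuous_interval) simp
  have "integral {c..d} (\<lambda>x. F b x - F a x) = integral {c..d} (\<lambda>x. integral {a..b} (\<lambda>s. F\<^sub>t s x))"
  proof (rule integral_cong)
    fix x assume "x \<in> {c..d}"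
    then have "((\<lambda>s. F\<^sub>t s x) has_integral F b x - F a x) {a..b}"
      using assms(1) deriv by (intro fundamental_theorem_of_calculus)
        (auto simp: has_real_derivative_iff_has_vector_derivative)
    then show "F b x - F a x = integral {a..b} (\<lambda>s. F\<^sub>t s x)" by (simp add: integral_unique)
  qed
  also have "\<dots> = integral {a..b} (\<lambda>s. integral {c..d} (F\<^sub>t s))"
  proof -
    have "continuous_on (cbox (c, a) (d, b)) (\<lambda>(x, s). F\<^sub>t s x)"
    proof -
      have "continuous_on ({c..d} \<times> {a..b}) ((\<lambda>(s, x). F\<^sub>t s x) \<circ> prod.swap)"
        using cont by (intro continuous_on_compose continuous_on_swap) (simp add: product_swap)
      then show ?thesis by (simp add: cbox_Pair_eq o_def case_prod_beta)
    qed
    from integral_swap_continuous[OF this] show ?thesis by simp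
  qed
  finally show "integral {c..d} (\<lambda>x. F b x - F a x) = integral {a..b} (\<lambda>s. integral {c..d} (F\<^sub>t s))" .
qed

lemma integration_by_parts_twice:
  fixes v v' v'' \<phi> \<phi>' \<phi>'' H H' H'' :: "real \<Rightarrow> real"
  assumes "0 \<le> L"
    and v: "\<And>x. x \<in> {0..L} \<Longrightarrow> (v has_real_derivative v' x) (at x within {0..L})"
           "\<And>x. x \<in> {0..L} \<Longrightarrow> (v' has_real_derivative v'' x) (at x within {0..L})"
           "continuous_on {0..L} v''" "v 0 = 0"
    and \<phi>: "\<And>x. x \<in> {0..L} \<Longrightarrow> (\<phi> has_real_derivative \<phi>' x) (at x within {0..L})"
           "\<And>x. x \<in> {0..L} \<Longrightarrow> (\<phi>' has_real_derivative \<phi>'' x) (at x within {0..L})"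
           "continuous_on {0..L} \<phi>''" "\<phi> L = 0" "\<phi>' L = 0"
    and H: "\<And>y. (H has_real_derivative H' y) (at y)" "\<And>y. (H' has_real_derivative H'' y) (at y)"
           "continuous_on UNIV H''" "H 0 = 0" "\<phi> 0 * H' 0 = 0"
  shows "integral {0..L} (\<lambda>x. \<phi> x * H' (v x) * v'' x)
       = integral {0..L} (\<lambda>x. \<phi>'' x * H (v x) - \<phi> x * H'' (v x) * (v' x)\<^sup>2)"
proof -
  have cont_diff: "continuous_on {0..L} f" if "\<And>x. x \<in> {0..L} \<Longrightarrow> (f has_real_derivative f' x) (at x within {0..L})"
    for f f' :: "real \<Rightarrow> real"
    using that by (meson DERIV_continuous continuous_on_eq_continuous_within)
  have cont: "continuous_on {0..L} v" "continuous_on {0..L} v'"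
    "continuous_on {0..L} \<phi>" "continuous_on {0..L} \<phi>'"
    using cont_diff[OF v(1)] cont_diff[OF v(2)] cont_diff[OF \<phi>(1)] cont_diff[OF \<phi>(2)] by auto
  have "continuous_on UNIV H" "continuous_on UNIV H'"
    using H(1,2) by (meson DERIV_isCont continuous_at_imp_continuous_on)+
  then have cont_Hv: "continuous_on {0..L} (\<lambda>x. H (v x))" "continuous_on {0..L} (\<lambda>x. H' (v x))"
    "continuous_on {0..L} (\<lambda>x. H'' (v x))"
    using H(3) by (auto intro: continuous_on_compose2[OF _ cont(1)])
  define A where "A = (\<lambda>x. \<phi> x * H' (v x) * v'' x)"
  define B where "B = (\<lambda>x. \<phi>'' x * H (v x) - \<phi> x * H'' (v x) * (v' x)\<^sup>2)"
  define P where "P x = \<phi> x * H' (v x) * v' x - \<phi>' x * H (v x)" for x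
  have "(P has_real_derivative A x - B x) (at x within {0..L})" if x: "x \<in> {0..L}" for x
    unfolding P_def A_def B_def
    by (rule DERIV_cong, (rule derivative_eq_intros DERIV_chain2[OF H(1)] DERIV_chain2[OF H(2)]
        v(1,2)[OF x] \<phi>(1,2)[OF x] refl)+) (simp add: power2_eq_square algebra_simps)
  then have "((\<lambda>x. A x - B x) has_integral P L - P 0) {0..L}"
    using assms(1) by (intro fundamental_theorem_of_calculus)
      (auto simp: has_real_derivative_iff_has_vector_derivative)
  moreover have "P L = 0" "P 0 = 0" using \<phi> H v(4) by (simp_all add: P_def)
  ultimately have "integral {0..L} (\<lambda>x. A x - B x) = 0" by (simp add: integral_unique)
  moreover have "A integrable_on {0..L}" "B integrable_on {0..L}"
    unfolding A_def B_def
    by (intro integrable_continuous_interval continuous_intros cont cont_Hv v(3) \<phi>(3))+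
  ultimately have "integral {0..L} A = integral {0..L} B" by (simp add: integral_diff)
  then show ?thesis by (simp add: A_def B_def)
qed

lemma integral_Icc_eq_set_integral:
  fixes f :: "real \<Rightarrow> real"
  assumes "continuous_on {a..b} f"
  shows "integral {a..b} f = (LINT x:{a..b}|lborel. f x)"
  using set_borel_integral_eq_integral(2)[OF borel_integrable_atLeastAtMost'[OF assms]] by simp

lemma set_integral_mono_set_nonneg:
  fixes f :: "real \<Rightarrow> real"
  assumes "set_integrable M A f" "B \<subseteq> A" "B \<in> sets M" "\<And>x. x \<in> A \<Longrightarrow> 0 \<le> f x"
  shows "(LINT x:B|M. f x) \<le> (LINT x:A|M. f x)"
proof -
  have "set_integrable M B f" using set_integrable_subset[OF assms(1,3,2)] .
  then have "(LINT x:B|M. f x) = (LINT x:A|M. indicator B x * f x)"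
    using assms(2) unfolding set_lebesgue_integral_def
    by (intro Bochner_Integration.integral_cong) (auto simp: indicator_def)
  also have "\<dots> \<le> (LINT x:A|M. f x)"
  proof (rule set_integral_mono)
    have "(\<lambda>x. indicator A x *\<^sub>R (indicator B x * f x)) = (\<lambda>x. indicator B x *\<^sub>R f x)"
      using assms(2) by (intro ext) (auto simp: indicator_def)
    then show "set_integrable M A (\<lambda>x. indicator B x * f x)"
      using \<open>set_integrable M B f\<close> by (simp add: set_integrable_def)
  qed (use assms in \<open>auto simp: indicator_def\<close>)
  finally show ?thesis .
qed

lemma AE_zero_if_set_integral_zero:
  fixes f :: "'a \<Rightarrow> real"
  assumes "set_integrable M A f" "AE x in M. x \<in> A \<longrightarrow> f x \<ge> 0" "(LINT x:A|M. f x) = 0"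
  shows "AE x in M. x \<in> A \<longrightarrow> f x = 0"
proof -
  have "AE x in M. indicator A x *\<^sub>R f x = 0"
  proof (subst integral_nonneg_eq_0_iff_AE[symmetric])
    show "integrable M (\<lambda>x. indicator A x *\<^sub>R f x)" using assms(1) by (simp add: set_integrable_def)
    show "AE x in M. 0 \<le> indicator A x *\<^sub>R f x"
      using assms(2) by eventually_elim (auto simp: indicator_def)
  qed (use assms(3) in \<open>simp add: set_lebesgue_integral_def\<close>)
  then show ?thesis by eventually_elim (auto simp: indicator_def)
qed

lemma AE_zero_if_first_moment_zero:
  fixes f :: "real \<Rightarrow> real"
  assumes "set_integrable lborel {0..} (\<lambda>x. x * f x)" "AE x in lborel. x \<in> {0..} \<longrightarrow> 0 \<le> f x"
    and "(LINT x:{0..}|lborel. x * f x) = 0"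
  shows "AE x in lborel. x \<in> {0..} \<longrightarrow> f x = 0"
proof -
  have "AE x in lborel. x \<in> {0..} \<longrightarrow> x * f x = 0"
  proof (rule AE_zero_if_set_integral_zero[OF assms(1) _ assms(3)])
    show "AE x in lborel. x \<in> {0..} \<longrightarrow> 0 \<le> x * f x"
      using assms(2) by eventually_elim auto
  qed
  then show ?thesis using AE_lborel_singleton[of 0] by eventually_elim auto
qed

lemma borel_measurable_cutoff [measurable]: "cutoff L \<in> borel_measurable borel"
  by (intro borel_measurable_continuous_onI continuous_on_cutoff)

lemma cutoff_indicator_tendsto:
  "(\<lambda>n. indicator {0..real (Suc n)} x *\<^sub>R (cutoff (real (Suc n)) x * y)) \<longlonglongrightarrow> indicator {0..} x *\<^sub>R y"
proof (cases "x \<ge> 0")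
  case True
  have "filterlim (\<lambda>n. real (Suc n)) at_top sequentially"
    by (rule filterlim_compose[OF filterlim_real_sequentially filterlim_Suc])
  from tendsto_mult[OF filterlim_compose[OF cutoff_tendsto[of x] this] tendsto_const[of y]]
  have "(\<lambda>n. cutoff (real (Suc n)) x * y) \<longlonglongrightarrow> indicator {0..} x *\<^sub>R y"
    using True by simp
  moreover have "\<forall>\<^sub>F n in sequentially. x \<le> real (Suc n)"
  proof (rule eventually_sequentiallyI[of "nat \<lceil>x\<rceil>"])
    show "x \<le> real (Suc n)" if "nat \<lceil>x\<rceil> \<le> n" for n using that by linarith
  qed
  ultimately show ?thesis
    by (elim Lim_transform_eventually) (use True in \<open>auto elim: eventually_mono\<close>)
qed (simp add: indicator_def)

lemma cutoff_set_integral_tendsto: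
  fixes f :: "real \<Rightarrow> real"
  assumes f: "set_integrable lborel {0..} f"
  shows "(\<lambda>n. LINT x:{0..real (Suc n)}|lborel. cutoff (real (Suc n)) x * f x)
           \<longlonglongrightarrow> (LINT x:{0..}|lborel. f x)"
  unfolding set_lebesgue_integral_def
proof (rule integral_dominated_convergence[where w = "\<lambda>x. indicator {0..} x * \<bar>f x\<bar>"])
  have f_meas: "(\<lambda>x. indicator {0..} x *\<^sub>R f x) \<in> borel_measurable lborel"
    using f by (simp add: set_integrable_def)
  then show "(\<lambda>x. indicator {0..} x *\<^sub>R f x) \<in> borel_measurable lborel" .
  show "(\<lambda>x. indicator {0..real (Suc n)} x *\<^sub>R (cutoff (real (Suc n)) x * f x)) \<in> borel_measurable lborel"
    for n
  proof -
    have "(\<lambda>x. indicator {0..real (Suc n)} x * cutoff (real (Suc n)) x * (indicator {0..} x *\<^sub>R f x))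
        \<in> borel_measurable lborel"
      using f_meas by measurable
    then show ?thesis by (rule measurable_cong[THEN iffD1, rotated]) (auto simp: indicator_def)
  qed
  show "integrable lborel (\<lambda>x. indicator {0..} x * \<bar>f x\<bar>)"
    using set_integrable_abs[OF f] by (simp add: set_integrable_def)
  show "AE x in lborel. (\<lambda>n. indicator {0..real (Suc n)} x *\<^sub>R (cutoff (real (Suc n)) x * f x))
      \<longlonglongrightarrow> indicator {0..} x *\<^sub>R f x"
    by (intro AE_I2 cutoff_indicator_tendsto)
  show "AE x in lborel. norm (indicator {0..real (Suc n)} x *\<^sub>R (cutoff (real (Suc n)) x * f x))
      \<le> indicator {0..} x * \<bar>f x\<bar>" for n
  proof (rule AE_I2)
    fix x :: real
    show "norm (indicator {0..real (Suc n)} x *\<^sub>R (cutoff (real (Suc n)) x * f x)) \<le> indicator {0..} x * \<bar>f x\<bar>"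
      using cutoff_bounds(1,2)[of x "real (Suc n)"]
      by (cases "x \<in> {0..real (Suc n)}") (auto simp: indicator_def abs_mult intro: mult_left_le_one_le)
  qed
qed

lemma cutoff_set_integral_monotone:
  fixes f :: "real \<Rightarrow> real"
  assumes f: "continuous_on {0..} f" and nonneg: "\<And>x. x \<ge> 0 \<Longrightarrow> f x \<ge> 0"
    and lim: "(\<lambda>n. LINT x:{0..real (Suc n)}|lborel. cutoff (real (Suc n)) x * f x) \<longlonglongrightarrow> c"
  shows "set_integrable lborel {0..} f" "(LINT x:{0..}|lborel. f x) = c"
proof -
  define g where "g n x = indicator {0..real (Suc n)} x *\<^sub>R (cutoff (real (Suc n)) x * f x)" for n x
  have "set_integrable lborel {0..real (Suc n)} (\<lambda>x. cutoff (real (Suc n)) x * f x)" for n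
    by (intro borel_integrable_atLeastAtMost' continuous_intros continuous_on_subset[OF f]) auto
  then have g_int: "integrable lborel (g n)" for n unfolding g_def set_integrable_def .
  have "g n x \<le> g (Suc n) x" for n x
  proof (cases "0 \<le> x \<and> x \<le> real (Suc n)")
    case True
    then show ?thesis
      using cutoff_mono[of x "real (Suc n)" "real (Suc (Suc n))"] nonneg[of x]
      by (simp add: g_def mult_right_mono)
  next
    case False
    then show ?thesis
      using cutoff_bounds(1)[of x "real (Suc (Suc n))"] nonneg[of x] by (auto simp: g_def indicator_def)
  qed
  then have mono: "AE x in lborel. incseq (\<lambda>n. g n x)" by (auto intro: incseq_SucI)
  have lim_g: "AE x in lborel. (\<lambda>n. g n x) \<longlonglongrightarrow> indicator {0..} x *\<^sub>R f x"
    unfolding g_def by (intro AE_I2 cutoff_indicator_tendsto)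
  have lim_int: "(\<lambda>n. integral\<^sup>L lborel (g n)) \<longlonglongrightarrow> c"
    using lim unfolding set_lebesgue_integral_def g_def .
  have meas: "(\<lambda>x. indicator {0..} x *\<^sub>R f x) \<in> borel_measurable lborel"
    using borel_measurable_continuous_on_indicator[OF _ f] by simp
  show "set_integrable lborel {0..} f"
    using integrable_monotone_convergence[OF g_int mono lim_g lim_int meas] by (simp add: set_integrable_def)
  show "(LINT x:{0..}|lborel. f x) = c"
    using integral_monotone_convergence[OF g_int mono lim_g lim_int meas]
    by (simp add: set_lebesgue_integral_def)
qed

lemma integral_le_cutoff_integral:
  fixes g :: "real \<Rightarrow> real"
  assumes g: "continuous_on {0..L} g" "\<And>x. x \<in> {0..L} \<Longrightarrow> 0 \<le> g x" and "0 < R" "2 * R \<le> L"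
  shows "integral {0..R} g \<le> 64 / 27 * integral {0..L} (\<lambda>x. cutoff L x * g x)"
proof -
  have cont: "continuous_on {0..R} g" using g(1) by (rule continuous_on_subset) (use assms in auto)
  have int: "(\<lambda>x. cutoff L x * g x) integrable_on {0..b}" if "b \<le> L" for b
    using continuous_on_subset[OF g(1)] that by (intro integrable_continuous_interval continuous_intros) auto
  have "integral {0..R} g \<le> integral {0..R} (\<lambda>x. 64 / 27 * (cutoff L x * g x))"
  proof (rule integral_le)
    show "g integrable_on {0..R}" by (rule integrable_continuous_interval[OF cont])
    show "(\<lambda>x. 64 / 27 * (cutoff L x * g x)) integrable_on {0..R}" using int assms by simp
    fix y assume y: "y \<in> {0..R}"
    have "27 / 64 * g y \<le> cutoff L y * g y"
    proof (rule mult_right_mono)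
      show "27 / 64 \<le> cutoff L y" using y assms by (intro cutoff_ge_on_half) auto
      show "0 \<le> g y" using y assms by (intro g(2)) auto
    qed
    then show "g y \<le> 64 / 27 * (cutoff L y * g y)" by simp
  qed
  also have "\<dots> = 64 / 27 * integral {0..R} (\<lambda>x. cutoff L x * g x)" by simp
  also have "integral {0..R} (\<lambda>x. cutoff L x * g x) \<le> integral {0..L} (\<lambda>x. cutoff L x * g x)"
  proof (rule integral_subset_le[OF _ int int])
    show "{0..R} \<subseteq> {0..L}" using assms by auto
    show "\<forall>y\<in>{0..L}. 0 \<le> cutoff L y * g y"
      using cutoff_bounds(1)[of _ L] g(2) assms by auto
  qed (use assms in auto)
  finally show ?thesis by simp
qed

lemma vanishes_if_cutoff_integrals_small:
  fixes g :: "real \<Rightarrow> real"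
  assumes g: "continuous_on {0..} g" "\<And>x. 0 \<le> x \<Longrightarrow> 0 \<le> g x"
    and small: "\<And>L. 0 < L \<Longrightarrow> integral {0..L} (\<lambda>x. cutoff L x * g x) \<le> K / L\<^sup>2"
    and "0 \<le> x"
  shows "g x = 0"
proof -
  define R where "R = x + 1"
  have R: "0 < R" "x \<in> {0..R}" using \<open>0 \<le> x\<close> by (auto simp: R_def)
  have cont: "continuous_on {0..b} g" for b using g(1) by (rule continuous_on_subset) auto
  have "integral {0..R} g \<le> (64 / 27 * \<bar>K\<bar>) / L" if L: "L \<ge> max (2 * R) 1" for L
  proof -
    have "integral {0..R} g \<le> 64 / 27 * integral {0..L} (\<lambda>x. cutoff L x * g x)"
      using L R g(2) by (intro integral_le_cutoff_integral cont) auto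
    also have "integral {0..L} (\<lambda>x. cutoff L x * g x) \<le> K / L\<^sup>2" using L R by (intro small) auto
    also have "\<dots> \<le> \<bar>K\<bar> / L\<^sup>2" by (simp add: divide_right_mono)
    also have "\<dots> \<le> \<bar>K\<bar> / L" using L by (intro divide_left_mono) (auto simp: power2_eq_square)
    finally show ?thesis by simp
  qed
  then have "integral {0..R} g \<le> 0" by (rule nonpos_if_le_const_over)
  moreover have "integral {0..R} g \<ge> 0"
    using g(2) by (intro integral_nonneg integrable_continuous_interval cont) auto
  ultimately have "(g has_integral 0) {0..R}"
    using integrable_integral[OF integrable_continuous_interval[OF cont[of R]]] by simp
  then show ?thesis
    using has_integral_0_cbox_imp_0[of 0 R g x] cont g(2) R by auto
qed

section \<open>Uniqueness of the sine transform\<close>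

lemma lborel_integral_reflect:
  fixes g :: "real \<Rightarrow> 'a :: {banach, second_countable_topology}"
  shows "(\<integral>x. g (- x) \<partial>lborel) = (\<integral>x. g x \<partial>lborel)"
  using lborel_integral_real_affine[of "-1" g 0] by simp

lemma lborel_integrable_reflect_iff:
  fixes g :: "real \<Rightarrow> 'a :: {banach, second_countable_topology}"
  shows "integrable lborel (\<lambda>x. g (- x)) \<longleftrightarrow> integrable lborel g"
  using lborel_integrable_real_affine_iff[of "-1" g 0] by simp

lemma fourier_transform_zero_if_odd_and_sine_transform_zero:
  fixes F :: "real \<Rightarrow> real"
  assumes F: "integrable lborel F" and odd: "\<And>x. F (- x) = - F x"
    and sine: "\<And>k. (\<integral>x. F x * sin (k * x) \<partial>lborel) = 0"
  shows "(CLINT x|lborel. F x *\<^sub>R iexp (k * x)) = 0"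
proof -
  have [measurable]: "F \<in> borel_measurable lborel" using F by auto
  have cos_int: "integrable lborel (\<lambda>x. F x * cos (k * x))"
    and sin_int: "integrable lborel (\<lambda>x. F x * sin (k * x))"
    by (auto intro!: Bochner_Integration.integrable_bound[OF F] AE_I2 mult_left_le simp: abs_mult)
  have "(\<integral>x. F x * cos (k * x) \<partial>lborel) = - (\<integral>x. F x * cos (k * x) \<partial>lborel)"
    using lborel_integral_reflect[of "\<lambda>x. F x * cos (k * x)"] by (simp add: odd)
  then have cos0: "(\<integral>x. F x * cos (k * x) \<partial>lborel) = 0" by simp
  have i1: "integrable lborel (\<lambda>x. complex_of_real (F x * cos (k * x)))"
    using cos_int by (rule integrable_of_real)
  have i2: "integrable lborel (\<lambda>x. \<i> * complex_of_real (F x * sin (k * x)))"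
    using integrable_of_real[OF sin_int] by (rule integrable_mult_right)
  have expand: "(\<lambda>x. F x *\<^sub>R iexp (k * x))
      = (\<lambda>x. complex_of_real (F x * cos (k * x)) + \<i> * complex_of_real (F x * sin (k * x)))"
    by (simp add: fun_eq_iff scaleR_conv_of_real complex_eq_iff Re_exp Im_exp)
  show ?thesis
    unfolding expand Bochner_Integration.integral_add[OF i1 i2] integral_mult_right_zero integral_complex_of_real
    using cos0 sine[of k] by simp
qed

lemma real_distribution_normalized_density:
  fixes P :: "real \<Rightarrow> real"
  assumes "integrable lborel P" "\<And>x. P x \<ge> 0" "(\<integral>x. P x \<partial>lborel) = c" "c > 0"
  shows "real_distribution (density lborel (\<lambda>x. P x / c))"
proof -
  have "emeasure (density lborel (\<lambda>x. P x / c)) UNIV = (\<integral>\<^sup>+ x. ennreal (P x / c) \<partial>lborel)"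
    using assms by (subst emeasure_density) auto
  also have "\<dots> = ennreal (\<integral>x. P x / c \<partial>lborel)"
    using assms by (intro nn_integral_eq_integral) auto
  also have "\<dots> = 1" using assms by simp
  finally have "prob_space (density lborel (\<lambda>x. P x / c))" by (intro prob_spaceI) simp
  then show ?thesis by (simp add: real_distribution_def real_distribution_axioms_def)
qed

lemma char_normalized_density:
  fixes P :: "real \<Rightarrow> real"
  assumes "P \<in> borel_measurable lborel" "\<And>x. P x \<ge> 0" "c > 0"
  shows "char (density lborel (\<lambda>x. P x / c)) k = (1 / c) *\<^sub>R (CLINT x|lborel. P x *\<^sub>R iexp (k * x))"
proof -
  have "char (density lborel (\<lambda>x. P x / c)) k = (CLINT x|lborel. (P x / c) *\<^sub>R iexp (k * x))"
    unfolding char_def using assms by (subst integral_density) auto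
  also have "\<dots> = (CLINT x|lborel. (1 / c) *\<^sub>R (P x *\<^sub>R iexp (k * x)))" by simp
  finally show ?thesis by (simp only: integral_scaleR_right)
qed

lemma AE_eq_if_fourier_transform_eq:
  fixes P Q :: "real \<Rightarrow> real"
  assumes P: "integrable lborel P" "\<And>x. P x \<ge> 0" and Q: "integrable lborel Q" "\<And>x. Q x \<ge> 0"
    and eq: "\<And>k. (CLINT x|lborel. P x *\<^sub>R iexp (k * x)) = (CLINT x|lborel. Q x *\<^sub>R iexp (k * x))"
  shows "AE x in lborel. P x = Q x"
proof -
  define c where "c = (\<integral>x. P x \<partial>lborel)"
  have "complex_of_real c = complex_of_real (\<integral>x. Q x \<partial>lborel)"
    using eq[of 0] by (simp add: c_def scaleR_conv_of_real)
  then have c_Q: "(\<integral>x. Q x \<partial>lborel) = c" by simp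
  have "c \<ge> 0" unfolding c_def using P by simp
  then consider "c = 0" | "c > 0" by linarith
  then show ?thesis
  proof cases
    case 1
    then have "AE x in lborel. P x = 0" "AE x in lborel. Q x = 0"
      using integral_nonneg_eq_0_iff_AE[OF P(1)] integral_nonneg_eq_0_iff_AE[OF Q(1)] P Q c_Q
      by (auto simp: c_def)
    then show ?thesis by eventually_elim simp
  next
    case 2
    have P_meas: "P \<in> borel_measurable lborel" and Q_meas: "Q \<in> borel_measurable lborel"
      using P Q by auto
    have "density lborel (\<lambda>x. P x / c) = density lborel (\<lambda>x. Q x / c)"
    proof (rule Levy_uniqueness)
      show "real_distribution (density lborel (\<lambda>x. P x / c))"
        using P 2 by (intro real_distribution_normalized_density) (auto simp: c_def)
      show "real_distribution (density lborel (\<lambda>x. Q x / c))"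
        using Q 2 c_Q by (intro real_distribution_normalized_density) auto
      show "char (density lborel (\<lambda>x. P x / c)) = char (density lborel (\<lambda>x. Q x / c))"
        using P Q P_meas Q_meas 2 by (intro ext) (simp only: char_normalized_density eq)
    qed
    then have "AE x in lborel. ennreal (P x / c) = ennreal (Q x / c)"
      using P_meas Q_meas by (intro sigma_finite_measure.density_unique[OF sigma_finite_lborel]) auto
    then show ?thesis
      by eventually_elim (use P Q 2 in \<open>simp add: ennreal_inj\<close>)
  qed
qed

lemma AE_zero_if_fourier_transform_zero:
  fixes F :: "real \<Rightarrow> real"
  assumes F: "integrable lborel F" and zero: "\<And>k. (CLINT x|lborel. F x *\<^sub>R iexp (k * x)) = 0"
  shows "AE x in lborel. F x = 0"
proof -
  define P Q where "P x = max 0 (F x)" and "Q x = max 0 (- F x)" for x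
  have F_meas[measurable]: "F \<in> borel_measurable lborel" using F by auto
  have P: "integrable lborel P" and Q: "integrable lborel Q"
    unfolding P_def Q_def by (auto intro!: Bochner_Integration.integrable_bound[OF F])
  have PQ: "F x = P x - Q x" for x by (simp add: P_def Q_def)
  have "AE x in lborel. P x = Q x"
  proof (rule AE_eq_if_fourier_transform_eq[OF P _ Q])
    fix k
    have "integrable lborel (\<lambda>x. R x *\<^sub>R iexp (k * x))" if "integrable lborel R" for R :: "real \<Rightarrow> real"
    proof -
      have [measurable]: "R \<in> borel_measurable lborel" using that by auto
      show ?thesis using that by (rule Bochner_Integration.integrable_bound) (auto simp: norm_mult)
    qed
    then show "(CLINT x|lborel. P x *\<^sub>R iexp (k * x)) = (CLINT x|lborel. Q x *\<^sub>R iexp (k * x))"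
      using zero[of k] P Q by (simp add: PQ scaleR_left_diff_distrib)
  qed (auto simp: P_def Q_def)
  then show ?thesis by eventually_elim (simp add: PQ)
qed

lemma AE_zero_if_sine_transform_zero:
  fixes f :: "real \<Rightarrow> real"
  assumes f: "set_integrable lborel {0..} f"
    and zero: "\<And>k. (LINT x:{0..}|lborel. sin (k * x) * f x) = 0"
  shows "AE x in lborel. x \<in> {0..} \<longrightarrow> f x = 0"
proof -
  define g where "g x = indicator {0<..} x * f x" for x
  define F where "F x = g x - g (- x)" for x
  have "set_integrable lborel {0<..} f" by (rule set_integrable_subset[OF f]) auto
  then have g: "integrable lborel g" by (simp add: g_def[abs_def] set_integrable_def)
  have g_refl: "integrable lborel (\<lambda>x. g (- x))" using g by (simp add: lborel_integrable_reflect_iff)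
  have sine_g: "(\<integral>x. g x * sin (k * x) \<partial>lborel) = 0" for k
  proof -
    have "(\<integral>x. g x * sin (k * x) \<partial>lborel) = (LINT x:{0..}|lborel. sin (k * x) * f x)"
      unfolding set_lebesgue_integral_def g_def
      by (intro Bochner_Integration.integral_cong) (auto simp: indicator_def)
    then show ?thesis using zero by simp
  qed
  have "AE x in lborel. F x = 0"
  proof (rule AE_zero_if_fourier_transform_zero)
    show F: "integrable lborel F" unfolding F_def using g g_refl by auto
    show "(CLINT x|lborel. F x *\<^sub>R iexp (k * x)) = 0" for k
    proof (rule fourier_transform_zero_if_odd_and_sine_transform_zero[OF F])
      show "F (- x) = - F x" for x by (simp add: F_def)
      fix k
      have "integrable lborel (\<lambda>x. h x * sin (k * x))" if "integrable lborel h" for h :: "real \<Rightarrow> real"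
      proof -
        have [measurable]: "h \<in> borel_measurable lborel" using that by auto
        show ?thesis
          using that by (rule Bochner_Integration.integrable_bound) (auto simp: abs_mult intro!: mult_left_le)
      qed
      moreover have "(\<integral>x. g (- x) * sin (k * x) \<partial>lborel) = - (\<integral>x. g x * sin (k * x) \<partial>lborel)"
        using lborel_integral_reflect[of "\<lambda>x. g x * sin (k * x)"] by simp
      ultimately show "(\<integral>x. F x * sin (k * x) \<partial>lborel) = 0"
        using g g_refl sine_g[of k] by (simp add: F_def left_diff_distrib)
    qed
  qed
  then show ?thesis
    using AE_lborel_singleton[of 0] by eventually_elim (auto simp: F_def g_def indicator_def)
qed

section \<open>The weak formulation\<close>

locale regular_solution =
  fixes u ut ux uxx :: "real \<Rightarrow> real \<Rightarrow> real"
  assumes deriv_t: "\<And>t x. 0 < t \<Longrightarrow> 0 \<le> x \<Longrightarrow> ((\<lambda>s. u s x) has_real_derivative ut t x) (at t)"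
    and deriv_x: "\<And>t x. 0 < t \<Longrightarrow> 0 \<le> x \<Longrightarrow> (u t has_real_derivative ux t x) (at x within {0..})"
    and deriv_xx: "\<And>t x. 0 < t \<Longrightarrow> 0 \<le> x \<Longrightarrow> (ux t has_real_derivative uxx t x) (at x within {0..})"
    and cont_u: "continuous_on ({0<..} \<times> {0..}) (\<lambda>(t, x). u t x)"
    and cont_ut: "continuous_on ({0<..} \<times> {0..}) (\<lambda>(t, x). ut t x)"
    and cont_ux: "continuous_on ({0<..} \<times> {0..}) (\<lambda>(t, x). ux t x)"
    and cont_uxx: "continuous_on ({0<..} \<times> {0..}) (\<lambda>(t, x). uxx t x)"
    and boundary: "\<And>t. 0 < t \<Longrightarrow> u t 0 = 0"
    and equation: "\<And>t x. 0 < t \<Longrightarrow> 0 < x \<Longrightarrow> ut t x = mass (u t) * uxx t x"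
begin

lemma continuous_on_u: "0 < t \<Longrightarrow> continuous_on {0..L} (u t)"
  using continuous_on_time_slice[OF cont_u] by (rule continuous_on_subset) auto

lemma continuous_on_uxx: "0 < t \<Longrightarrow> continuous_on {0..L} (uxx t)"
  using continuous_on_time_slice[OF cont_uxx] by (rule continuous_on_subset) auto

lemma integral_time_derivative_eq:
  fixes \<phi> \<phi>' \<phi>'' H H' H'' :: "real \<Rightarrow> real"
  assumes "0 < s" "0 \<le> L"
    and \<phi>: "\<And>x. x \<in> {0..L} \<Longrightarrow> (\<phi> has_real_derivative \<phi>' x) (at x within {0..L})"
           "\<And>x. x \<in> {0..L} \<Longrightarrow> (\<phi>' has_real_derivative \<phi>'' x) (at x within {0..L})"
           "continuous_on {0..L} \<phi>''" "\<phi> L = 0" "\<phi>' L = 0"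
    and H: "\<And>y. (H has_real_derivative H' y) (at y)" "\<And>y. (H' has_real_derivative H'' y) (at y)"
           "continuous_on UNIV H''" "H 0 = 0" "\<phi> 0 * H' 0 = 0"
  shows "integral {0..L} (\<lambda>x. \<phi> x * (H' (u s x) * ut s x))
       = mass (u s) * integral {0..L} (\<lambda>x. \<phi>'' x * H (u s x) - \<phi> x * H'' (u s x) * (ux s x)\<^sup>2)"
proof -
  have "integral {0..L} (\<lambda>x. \<phi> x * (H' (u s x) * ut s x))
      = integral {0..L} (\<lambda>x. mass (u s) * (\<phi> x * H' (u s x) * uxx s x))"
    by (rule integral_spike[of "{0}"]) (auto simp: equation[OF \<open>0 < s\<close>])
  also have "\<dots> = mass (u s) * integral {0..L} (\<lambda>x. \<phi> x * H' (u s x) * uxx s x)" by simp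
  also have "integral {0..L} (\<lambda>x. \<phi> x * H' (u s x) * uxx s x)
      = integral {0..L} (\<lambda>x. \<phi>'' x * H (u s x) - \<phi> x * H'' (u s x) * (ux s x)\<^sup>2)"
  proof -
    have "(u s has_real_derivative ux s x) (at x within {0..L})"
      and "(ux s has_real_derivative uxx s x) (at x within {0..L})" if "x \<in> {0..L}" for x
      using deriv_x[OF \<open>0 < s\<close>, of x] deriv_xx[OF \<open>0 < s\<close>, of x] that by (auto intro: DERIV_subset)
    from integration_by_parts_twice[OF \<open>0 \<le> L\<close> this continuous_on_uxx[OF \<open>0 < s\<close>]
        boundary[OF \<open>0 < s\<close>] \<phi> H]
    show ?thesis .
  qed
  finally show ?thesis .
qed

lemma weak_identity:
  fixes \<phi> \<phi>' \<phi>'' H H' H'' :: "real \<Rightarrow> real"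
  assumes ab: "0 < a" "a \<le> b" and "0 \<le> L"
    and \<phi>: "\<And>x. x \<in> {0..L} \<Longrightarrow> (\<phi> has_real_derivative \<phi>' x) (at x within {0..L})"
           "\<And>x. x \<in> {0..L} \<Longrightarrow> (\<phi>' has_real_derivative \<phi>'' x) (at x within {0..L})"
           "continuous_on {0..L} \<phi>''" "\<phi> L = 0" "\<phi>' L = 0"
    and H: "\<And>y. (H has_real_derivative H' y) (at y)" "\<And>y. (H' has_real_derivative H'' y) (at y)"
           "continuous_on UNIV H''" "H 0 = 0" "\<phi> 0 * H' 0 = 0"
  defines "R s \<equiv> mass (u s) * integral {0..L} (\<lambda>x. \<phi>'' x * H (u s x) - \<phi> x * H'' (u s x) * (ux s x)\<^sup>2)"
  shows "R integrable_on {a..b}"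
    and "integral {0..L} (\<lambda>x. \<phi> x * H (u b x)) - integral {0..L} (\<lambda>x. \<phi> x * H (u a x)) = integral {a..b} R"
proof -
  have cont_\<phi>: "continuous_on {0..L} \<phi>"
    using \<phi>(1) by (meson DERIV_continuous continuous_on_eq_continuous_within)
  have cont_H: "continuous_on UNIV H" "continuous_on UNIV H'"
    using H(1,2) by (meson DERIV_isCont continuous_at_imp_continuous_on)+
  define F\<^sub>t where "F\<^sub>t s x = \<phi> x * (H' (u s x) * ut s x)" for s x
  have deriv: "((\<lambda>s. \<phi> x * H (u s x)) has_real_derivative F\<^sub>t s x) (at s within {a..b})"
    if "s \<in> {a..b}" "x \<in> {0..L}" for s x
    unfolding F\<^sub>t_def using that ab
    by (intro has_field_derivative_at_within[OF DERIV_cmult] DERIV_chain2[OF H(1) deriv_t]) auto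
  have "continuous_on ({a..b} \<times> {0..L}) (\<lambda>p. \<phi> (snd p) * (H' (u (fst p) (snd p)) * ut (fst p) (snd p)))"
    using continuous_on_rectangle[OF cont_u ab(1), of b L] continuous_on_rectangle[OF cont_ut ab(1), of b L]
    by (intro continuous_intros continuous_on_compose2[OF cont_\<phi>] continuous_on_compose2[OF cont_H(2)])
      (auto simp: case_prod_beta)
  then have cont: "continuous_on ({a..b} \<times> {0..L}) (\<lambda>(s, x). F\<^sub>t s x)"
    by (simp add: F\<^sub>t_def case_prod_beta)
  have space: "integral {0..L} (F\<^sub>t s) = R s" if "s \<in> {a..b}" for s
    unfolding F\<^sub>t_def R_def using that ab by (intro integral_time_derivative_eq[OF _ \<open>0 \<le> L\<close> \<phi> H]) auto
  show "R integrable_on {a..b}"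
    using integral_increment_eq_integral_time_derivative(1)[OF ab(2) deriv cont]
    by (rule integrable_spike_finite[of "{}", rotated 2]) (simp_all add: space)
  have "integral {0..L} (\<lambda>x. \<phi> x * H (u b x)) - integral {0..L} (\<lambda>x. \<phi> x * H (u a x))
      = integral {0..L} (\<lambda>x. \<phi> x * H (u b x) - \<phi> x * H (u a x))"
    using ab cont_\<phi> by (intro integral_diff[symmetric] integrable_continuous_interval continuous_intros
        continuous_on_compose2[OF cont_H(1) continuous_on_u]) auto
  also have "\<dots> = integral {a..b} (\<lambda>s. integral {0..L} (F\<^sub>t s))"
    by (rule integral_increment_eq_integral_time_derivative(2)[OF ab(2) deriv cont])
  also have "\<dots> = integral {a..b} R" by (rule integral_cong) (simp add: space)
  finally show "integral {0..L} (\<lambda>x. \<phi> x * H (u b x)) - integral {0..L} (\<lambda>x. \<phi> x * H (u a x))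
      = integral {a..b} R" .
qed

end

locale L1_solution = regular_solution +
  fixes uin :: "real \<Rightarrow> real"
  assumes initial: "\<And>x. 0 \<le> x \<Longrightarrow> u 0 x = uin x"
    and integrable: "\<And>t. 0 \<le> t \<Longrightarrow> set_integrable lborel {0..} (u t)"
    and L1_continuous:
      "\<And>t. 0 \<le> t \<Longrightarrow> ((\<lambda>s. LINT x:{0..}|lborel. \<bar>u s x - u t x\<bar>) \<longlongrightarrow> 0) (at t within {0..})"
    and bounded: "\<And>T. 0 \<le> T \<Longrightarrow> \<exists>C. \<forall>t\<in>{0..T}. \<forall>x\<ge>0. \<bar>u t x\<bar> \<le> C"

lemma strong_solutionE:
  assumes "strong_solution uin u"
  obtains ut ux uxx where "L1_solution u ut ux uxx uin"
  using assms unfolding strong_solution_def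
  apply (elim conjE exE)
  subgoal for ut ux uxx by (rule that[of ut ux uxx], unfold_locales) simp_all
  done

context L1_solution
begin

definition L1_dist :: "real \<Rightarrow> real \<Rightarrow> real" where
  "L1_dist r s = (LINT x:{0..}|lborel. \<bar>u r x - u s x\<bar>)"

definition L1_norm :: "real \<Rightarrow> real" where
  "L1_norm s = (LINT x:{0..}|lborel. \<bar>u s x\<bar>)"

lemma continuous_on_if_L1_lipschitz:
  fixes f :: "real \<Rightarrow> real"
  assumes "S \<subseteq> {0..}" and lip: "\<And>r s. r \<in> S \<Longrightarrow> s \<in> S \<Longrightarrow> \<bar>f r - f s\<bar> \<le> K * L1_dist r s"
  shows "continuous_on S f"
  unfolding continuous_on_def
proof
  fix s assume s: "s \<in> S"
  have "((\<lambda>r. L1_dist r s) \<longlongrightarrow> 0) (at s within {0..})"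
    using L1_continuous[of s] s assms(1) by (auto simp: L1_dist_def)
  then have "((\<lambda>r. L1_dist r s) \<longlongrightarrow> 0) (at s within S)"
    by (rule tendsto_within_subset) (rule assms(1))
  from tendsto_mult[OF tendsto_const[of K] this]
  have "((\<lambda>r. K * L1_dist r s) \<longlongrightarrow> 0) (at s within S)" by simp
  then have "((\<lambda>r. f r - f s) \<longlongrightarrow> 0) (at s within S)"
    by (rule Lim_null_comparison[rotated]) (use s lip in \<open>auto simp: eventually_at_filter\<close>)
  then show "(f \<longlongrightarrow> f s) (at s within S)" by (simp add: Lim_null[symmetric])
qed

lemma mass_lipschitz:
  assumes "0 \<le> r" "0 \<le> s"
  shows "\<bar>mass (u r) - mass (u s)\<bar> \<le> L1_dist r s"
proof -
  have "mass (u r) - mass (u s) = (LINT x:{0..}|lborel. u r x - u s x)"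
    unfolding mass_def using set_integral_diff(2)[OF integrable integrable] assms by simp
  then show ?thesis unfolding L1_dist_def
    using set_integral_norm_bound[OF set_integral_diff(1)[OF integrable integrable]] assms by simp
qed

lemma L1_norm_lipschitz:
  assumes "0 \<le> r" "0 \<le> s"
  shows "\<bar>L1_norm r - L1_norm s\<bar> \<le> L1_dist r s"
proof -
  have int: "set_integrable lborel {0..} (\<lambda>x. \<bar>u q x\<bar>)" if "0 \<le> q" for q
    using integrable[OF that] by (rule set_integrable_abs)
  have "L1_norm r - L1_norm s = (LINT x:{0..}|lborel. \<bar>u r x\<bar> - \<bar>u s x\<bar>)"
    unfolding L1_norm_def using set_integral_diff(2)[OF int int] assms by simp
  also have "\<bar>\<dots>\<bar> \<le> (LINT x:{0..}|lborel. \<bar>\<bar>u r x\<bar> - \<bar>u s x\<bar>\<bar>)"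
    using set_integral_norm_bound[OF set_integral_diff(1)[OF int int]] assms by simp
  also have "\<dots> \<le> L1_dist r s" unfolding L1_dist_def
    using assms by (intro set_integral_mono set_integrable_abs set_integral_diff(1) int integrable) auto
  finally show ?thesis .
qed

lemma abs_mass_le_L1_norm: "0 \<le> s \<Longrightarrow> \<bar>mass (u s)\<bar> \<le> L1_norm s"
  unfolding mass_def L1_norm_def using set_integral_norm_bound[OF integrable] by simp

lemma continuous_on_mass: "continuous_on {0..} (\<lambda>s. mass (u s))"
  using mass_lipschitz by (intro continuous_on_if_L1_lipschitz[where K = 1]) auto

lemma uniform_bounds:
  assumes "0 \<le> T"
  obtains C N where "0 \<le> C" "0 \<le> N" "\<And>s x. s \<in> {0..T} \<Longrightarrow> 0 \<le> x \<Longrightarrow> \<bar>u s x\<bar> \<le> C"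
    "\<And>s. s \<in> {0..T} \<Longrightarrow> L1_norm s \<le> N" "\<And>s. s \<in> {0..T} \<Longrightarrow> \<bar>mass (u s)\<bar> \<le> N"
proof -
  obtain C where C: "\<forall>s\<in>{0..T}. \<forall>x\<ge>0. \<bar>u s x\<bar> \<le> C" using bounded[OF assms] by blast
  have "continuous_on {0..T} L1_norm"
    using L1_norm_lipschitz by (intro continuous_on_if_L1_lipschitz[where K = 1]) auto
  from continuous_attains_sup[OF compact_Icc _ this] assms
  obtain m where m: "m \<in> {0..T}" "\<And>s. s \<in> {0..T} \<Longrightarrow> L1_norm s \<le> L1_norm m" by auto
  show ?thesis
  proof (rule that[of C "L1_norm m"])
    show "0 \<le> C" using C assms by force
    show "0 \<le> L1_norm m" using abs_mass_le_L1_norm[of m] m(1) by auto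
    show "\<bar>mass (u s)\<bar> \<le> L1_norm m" if "s \<in> {0..T}" for s
      using abs_mass_le_L1_norm[of s] m(2)[OF that] that by auto
  qed (use C m in auto)
qed

lemma integral_abs_le_L1_norm:
  assumes "0 < r"
  shows "integral {0..L} (\<lambda>x. \<bar>u r x\<bar>) \<le> L1_norm r"
proof -
  have "integral {0..L} (\<lambda>x. \<bar>u r x\<bar>) = (LINT x:{0..L}|lborel. \<bar>u r x\<bar>)"
    using continuous_on_u[OF assms] by (intro integral_Icc_eq_set_integral continuous_intros)
  also have "\<dots> \<le> L1_norm r" unfolding L1_norm_def
    using integrable[of r] assms by (intro set_integral_mono_set_nonneg set_integrable_abs) auto
  finally show ?thesis .
qed

lemma abs_integral_weighted_le:
  assumes "0 < r" "0 \<le> L" "continuous_on {0..L} w" "\<And>x. x \<in> {0..L} \<Longrightarrow> \<bar>w x\<bar> \<le> \<beta>"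
  shows "\<bar>integral {0..L} (\<lambda>x. w x * u r x)\<bar> \<le> \<beta> * L1_norm r"
proof -
  have "0 \<le> \<beta>" using assms(2) assms(4)[of 0] by auto
  have "norm (integral {0..L} (\<lambda>x. w x * u r x)) \<le> integral {0..L} (\<lambda>x. \<beta> * \<bar>u r x\<bar>)"
    using continuous_on_u[OF assms(1)] assms(3,4)
    by (intro integral_norm_bound_integral integrable_continuous_interval continuous_intros)
      (auto simp: abs_mult intro: mult_right_mono)
  also have "\<dots> = \<beta> * integral {0..L} (\<lambda>x. \<bar>u r x\<bar>)" by simp
  also have "\<dots> \<le> \<beta> * L1_norm r"
    using integral_abs_le_L1_norm[OF assms(1)] \<open>0 \<le> \<beta>\<close> by (rule mult_left_mono)
  finally show ?thesis by simp
qed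

lemma set_integrable_weighted:
  fixes w H :: "real \<Rightarrow> real"
  assumes "0 \<le> q" and w: "continuous_on {0..L} w" "\<And>x. x \<in> {0..L} \<Longrightarrow> \<bar>w x\<bar> \<le> W"
    and H: "continuous_on UNIV H" "H 0 = 0" and "0 \<le> W" "0 \<le> K"
    and lip: "\<And>a b. \<bar>a\<bar> \<le> C \<Longrightarrow> \<bar>b\<bar> \<le> C \<Longrightarrow> \<bar>H a - H b\<bar> \<le> K * \<bar>a - b\<bar>"
    and bound: "\<And>x. 0 \<le> x \<Longrightarrow> \<bar>u q x\<bar> \<le> C"
  shows "set_integrable lborel {0..L} (\<lambda>x. w x * H (u q x))"
proof (rule set_integrable_bound)
  show "set_integrable lborel {0..L} (\<lambda>x. (W * K) * u q x)"
    using \<open>0 \<le> q\<close> by (intro set_integrable_mult_right set_integrable_subset[OF integrable]) auto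
  have "(\<lambda>x. indicator {0..L} x *\<^sub>R (w x * H (u q x)))
      = (\<lambda>x. (indicator {0..L} x *\<^sub>R w x) * H (indicator {0..} x *\<^sub>R u q x))"
    by (auto simp: fun_eq_iff indicator_def H(2))
  moreover have "(\<lambda>x. indicator {0..} x *\<^sub>R u q x) \<in> borel_measurable lborel"
    using integrable[OF \<open>0 \<le> q\<close>] by (simp add: set_integrable_def)
  ultimately show "set_borel_measurable lborel {0..L} (\<lambda>x. w x * H (u q x))"
    unfolding set_borel_measurable_def using borel_measurable_continuous_on_indicator[OF _ w(1)]
    by (auto intro!: borel_measurable_times borel_measurable_continuous_on[OF H(1)])
  have "\<bar>w x * H (u q x)\<bar> \<le> W * K * \<bar>u q x\<bar>" if "x \<in> {0..L}" for x
    using lip[of "u q x" 0] bound[of x] w(2)[OF that] that H(2) \<open>0 \<le> K\<close>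
    by (auto simp: abs_mult mult.assoc intro!: mult_mono)
  then show "AE x in lborel. x \<in> {0..L} \<longrightarrow> norm (w x * H (u q x)) \<le> norm (W * K * u q x)"
    using \<open>0 \<le> W\<close> \<open>0 \<le> K\<close> by (auto simp: abs_mult)
qed

lemma weighted_integral_lipschitz:
  fixes w H :: "real \<Rightarrow> real"
  assumes "0 \<le> r" "0 \<le> s" and w: "continuous_on {0..L} w" "\<And>x. x \<in> {0..L} \<Longrightarrow> \<bar>w x\<bar> \<le> W"
    and H: "continuous_on UNIV H" "H 0 = 0" and "0 \<le> W" "0 \<le> K"
    and lip: "\<And>a b. \<bar>a\<bar> \<le> C \<Longrightarrow> \<bar>b\<bar> \<le> C \<Longrightarrow> \<bar>H a - H b\<bar> \<le> K * \<bar>a - b\<bar>"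
    and bound: "\<And>q x. q \<in> {r, s} \<Longrightarrow> 0 \<le> x \<Longrightarrow> \<bar>u q x\<bar> \<le> C"
  shows "\<bar>(LINT x:{0..L}|lborel. w x * H (u r x)) - (LINT x:{0..L}|lborel. w x * H (u s x))\<bar>
           \<le> W * K * L1_dist r s"
proof -
  have int: "set_integrable lborel {0..L} (\<lambda>x. w x * H (u q x))" if "q \<in> {r, s}" for q
    using that assms by (intro set_integrable_weighted[OF _ w H \<open>0 \<le> W\<close> \<open>0 \<le> K\<close> lip]) auto
  have diff: "set_integrable lborel {0..} (\<lambda>x. \<bar>u r x - u s x\<bar>)"
    using assms(1,2) by (intro set_integrable_abs set_integral_diff(1) integrable)
  have "\<bar>(LINT x:{0..L}|lborel. w x * H (u r x)) - (LINT x:{0..L}|lborel. w x * H (u s x))\<bar>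
      \<le> (LINT x:{0..L}|lborel. \<bar>w x * H (u r x) - w x * H (u s x)\<bar>)"
    using set_integral_norm_bound[OF set_integral_diff(1)[OF int int]] set_integral_diff(2)[OF int int]
    by simp
  also have "\<dots> \<le> (LINT x:{0..L}|lborel. W * K * \<bar>u r x - u s x\<bar>)"
  proof (rule set_integral_mono)
    show "set_integrable lborel {0..L} (\<lambda>x. \<bar>w x * H (u r x) - w x * H (u s x)\<bar>)"
      by (intro set_integrable_abs set_integral_diff(1) int) auto
    show "set_integrable lborel {0..L} (\<lambda>x. W * K * \<bar>u r x - u s x\<bar>)"
      using diff by (intro set_integrable_mult_right set_integrable_subset[OF diff]) auto
    fix x assume x: "x \<in> {0..L}"
    have "\<bar>w x * H (u r x) - w x * H (u s x)\<bar> = \<bar>w x\<bar> * \<bar>H (u r x) - H (u s x)\<bar>"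
      by (simp add: abs_mult right_diff_distrib[symmetric])
    also have "\<dots> \<le> W * (K * \<bar>u r x - u s x\<bar>)"
      using w(2)[OF x] lip[OF bound bound, of r x s x] x \<open>0 \<le> W\<close> by (intro mult_mono) auto
    finally show "\<bar>w x * H (u r x) - w x * H (u s x)\<bar> \<le> W * K * \<bar>u r x - u s x\<bar>" by simp
  qed
  also have "\<dots> = W * K * (LINT x:{0..L}|lborel. \<bar>u r x - u s x\<bar>)"
    by (rule set_integral_mult_right)
  also have "\<dots> \<le> W * K * L1_dist r s"
    unfolding L1_dist_def using \<open>0 \<le> W\<close> \<open>0 \<le> K\<close>
    by (intro mult_left_mono set_integral_mono_set_nonneg[OF diff]) auto
  finally show ?thesis .
qed

lemma continuous_on_weighted_integral:
  fixes w H :: "real \<Rightarrow> real"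
  assumes "0 \<le> T" "continuous_on {0..L} w" "continuous_on UNIV H" "H 0 = 0"
    and lip: "\<And>C. \<exists>K. K-lipschitz_on {-C..C} H"
  shows "continuous_on {0..T} (\<lambda>r. LINT x:{0..L}|lborel. w x * H (u r x))"
proof -
  obtain W where W: "0 < W" "\<And>x. x \<in> {0..L} \<Longrightarrow> \<bar>w x\<bar> \<le> W"
    using compact_imp_bounded[OF compact_continuous_image[OF assms(2) compact_Icc]]
    by (auto simp: bounded_pos)
  obtain C where C: "\<And>s x. s \<in> {0..T} \<Longrightarrow> 0 \<le> x \<Longrightarrow> \<bar>u s x\<bar> \<le> C"
    using uniform_bounds[OF assms(1)] by metis
  obtain K where "K-lipschitz_on {-C..C} H" using lip by blast
  then have K: "0 \<le> K" "\<And>a b. \<bar>a\<bar> \<le> C \<Longrightarrow> \<bar>b\<bar> \<le> C \<Longrightarrow> \<bar>H a - H b\<bar> \<le> K * \<bar>a - b\<bar>"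
    by (auto simp: lipschitz_on_def dist_real_def abs_le_iff)
  show ?thesis
  proof (rule continuous_on_if_L1_lipschitz[where K = "W * K"])
    fix r s assume "r \<in> {0..T}" "s \<in> {0..T}"
    then show "\<bar>(LINT x:{0..L}|lborel. w x * H (u r x)) - (LINT x:{0..L}|lborel. w x * H (u s x))\<bar>
        \<le> W * K * L1_dist r s"
      using W C K assms(2-4) by (intro weighted_integral_lipschitz[where C = C]) auto
  qed auto
qed

lemma weak_increment_le:
  fixes \<phi> \<phi>' \<phi>'' H H' H'' :: "real \<Rightarrow> real"
  assumes "0 < s" "0 < L"
    and \<phi>: "\<And>x. (\<phi> has_real_derivative \<phi>' x) (at x)" "\<And>x. (\<phi>' has_real_derivative \<phi>'' x) (at x)"
           "continuous_on {0..L} \<phi>''" "\<phi> L = 0" "\<phi>' L = 0"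
    and H: "\<And>y. (H has_real_derivative H' y) (at y)" "\<And>y. (H' has_real_derivative H'' y) (at y)"
           "continuous_on UNIV H''" "H 0 = 0" "\<phi> 0 * H' 0 = 0" "\<And>C. \<exists>K. K-lipschitz_on {-C..C} H"
    and bound: "\<And>r. 0 < r \<Longrightarrow> r \<le> s \<Longrightarrow>
      mass (u r) * integral {0..L} (\<lambda>x. \<phi>'' x * H (u r x) - \<phi> x * H'' (u r x) * (ux r x)\<^sup>2) \<le> M"
  shows "(LINT x:{0..L}|lborel. \<phi> x * H (u s x)) \<le> (LINT x:{0..L}|lborel. \<phi> x * H (u 0 x)) + s * M"
proof -
  define \<Phi> where "\<Phi> r = (LINT x:{0..L}|lborel. \<phi> x * H (u r x))" for r
  have cont_\<phi>: "continuous_on {0..L} \<phi>"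
    using \<phi>(1) by (meson DERIV_isCont continuous_at_imp_continuous_on)
  have cont_H: "continuous_on UNIV H"
    using H(1) by (meson DERIV_isCont continuous_at_imp_continuous_on)
  have \<Phi>_eq: "\<Phi> r = integral {0..L} (\<lambda>x. \<phi> x * H (u r x))" if "0 < r" for r
    unfolding \<Phi>_def using that
    by (intro integral_Icc_eq_set_integral[symmetric] continuous_intros cont_\<phi>
        continuous_on_compose2[OF cont_H continuous_on_u]) auto
  have "\<Phi> s - \<Phi> e \<le> (s - e) * M" if e: "0 < e" "e \<le> s" for e
  proof -
    note weak = weak_identity[OF e less_imp_le[OF \<open>0 < L\<close>] has_field_derivative_at_within[OF \<phi>(1)]
        has_field_derivative_at_within[OF \<phi>(2)] \<phi>(3-5) H(1-5)]
    have "\<Phi> s - \<Phi> e = integral {e..s}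
        (\<lambda>r. mass (u r) * integral {0..L} (\<lambda>x. \<phi>'' x * H (u r x) - \<phi> x * H'' (u r x) * (ux r x)\<^sup>2))"
      using weak(2) e by (simp add: \<Phi>_eq)
    also have "\<dots> \<le> integral {e..s} (\<lambda>_. M)"
      using weak(1) bound e by (intro integral_le) auto
    finally show ?thesis using e by simp
  qed
  \<comment> \<open>The weak identity needs \<open>e > 0\<close>; at time \<open>0\<close> only the \<open>L\<^sup>1\<close>-continuity of \<open>u\<close> is available.\<close>
  moreover have "continuous_on {0..s} \<Phi>"
    unfolding \<Phi>_def using assms cont_\<phi> cont_H by (intro continuous_on_weighted_integral) auto
  ultimately have "\<Phi> s - \<Phi> 0 \<le> (s - 0) * M"
    using \<open>0 < s\<close> by (intro le_at_left_endpoint[of 0 s "\<lambda>e. \<Phi> s - \<Phi> e"]) (auto intro!: continuous_intros)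
  then show ?thesis by (simp add: \<Phi>_def)
qed

section \<open>Positivity\<close>

lemma cutoff_neg_cube_rate_le:
  assumes r: "0 < r" and L: "0 < L" and mass: "0 \<le> mass (u r)" "mass (u r) \<le> N"
    and N: "L1_norm r \<le> N" and C: "\<And>x. 0 \<le> x \<Longrightarrow> \<bar>u r x\<bar> \<le> C"
  shows "mass (u r) * integral {0..L} (\<lambda>x. cutoff'' L x * neg_cube (u r x)
           - cutoff L x * (6 * max 0 (- u r x)) * (ux r x)\<^sup>2) \<le> N * (90 / L\<^sup>2 * C\<^sup>2 * N)"
proof -
  have "0 \<le> C" using C[of 0] by auto
  have cont_r: "continuous_on {0..L} (u r)" "continuous_on {0..L} (ux r)"
    using continuous_on_u[OF r] continuous_on_time_slice[OF cont_ux r] by (auto elim: continuous_on_subset)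
  have "integral {0..L} (\<lambda>x. cutoff'' L x * neg_cube (u r x) - cutoff L x * (6 * max 0 (- u r x)) * (ux r x)\<^sup>2)
      \<le> integral {0..L} (\<lambda>x. 90 / L\<^sup>2 * C\<^sup>2 * \<bar>u r x\<bar>)"
  proof (rule integral_le)
    fix x assume x: "x \<in> {0..L}"
    have "\<bar>neg_cube (u r x)\<bar> \<le> 3 * C\<^sup>2 * \<bar>u r x\<bar>"
      using neg_cube_lipschitz[of "u r x" C 0] C[of x] x \<open>0 \<le> C\<close> by (simp add: neg_cube_def)
    moreover have "\<bar>cutoff'' L x\<bar> \<le> 30 / L\<^sup>2" using cutoff_bounds(4)[of x L] x L by auto
    ultimately have "\<bar>cutoff'' L x\<bar> * \<bar>neg_cube (u r x)\<bar> \<le> 30 / L\<^sup>2 * (3 * C\<^sup>2 * \<bar>u r x\<bar>)"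
      by (intro mult_mono) auto
    then have "cutoff'' L x * neg_cube (u r x) \<le> 30 / L\<^sup>2 * (3 * C\<^sup>2 * \<bar>u r x\<bar>)"
      by (simp add: abs_mult[symmetric])
    moreover have "0 \<le> cutoff L x * (6 * max 0 (- u r x)) * (ux r x)\<^sup>2"
      using cutoff_bounds(1)[of x L] x L by simp
    ultimately show "cutoff'' L x * neg_cube (u r x) - cutoff L x * (6 * max 0 (- u r x)) * (ux r x)\<^sup>2
        \<le> 90 / L\<^sup>2 * C\<^sup>2 * \<bar>u r x\<bar>" by simp
  qed (use cont_r L continuous_on_compose2[OF continuous_on_neg_cube cont_r(1)]
      in \<open>auto intro!: integrable_continuous_interval continuous_intros\<close>)
  also have "\<dots> = 90 / L\<^sup>2 * C\<^sup>2 * integral {0..L} (\<lambda>x. \<bar>u r x\<bar>)" by simp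
  also have "\<dots> \<le> 90 / L\<^sup>2 * C\<^sup>2 * N"
    using integral_abs_le_L1_norm[OF r, of L] N by (intro mult_left_mono) auto
  finally have I: "integral {0..L} (\<lambda>x. cutoff'' L x * neg_cube (u r x)
      - cutoff L x * (6 * max 0 (- u r x)) * (ux r x)\<^sup>2) \<le> 90 / L\<^sup>2 * C\<^sup>2 * N" .
  have "0 \<le> 90 / L\<^sup>2 * C\<^sup>2 * N" using mass by simp
  from order.trans[OF mult_left_mono[OF I mass(1)] mult_right_mono[OF mass(2) this]] show ?thesis .
qed

lemma cutoff_neg_cube_integral_le:
  assumes s: "0 < s" and L: "0 < L"
    and mass_nonneg: "\<And>r. r \<in> {0..s} \<Longrightarrow> 0 \<le> mass (u r)"
    and uin_nonneg: "AE x in lborel. x \<in> {0..} \<longrightarrow> 0 \<le> uin x"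
    and C: "\<And>r x. r \<in> {0..s} \<Longrightarrow> 0 \<le> x \<Longrightarrow> \<bar>u r x\<bar> \<le> C"
    and N: "\<And>r. r \<in> {0..s} \<Longrightarrow> L1_norm r \<le> N" "\<And>r. r \<in> {0..s} \<Longrightarrow> \<bar>mass (u r)\<bar> \<le> N"
  shows "integral {0..L} (\<lambda>x. cutoff L x * neg_cube (u s x)) \<le> s * N * (90 * C\<^sup>2 * N) / L\<^sup>2"
proof -
  define B where "B = 90 / L\<^sup>2 * C\<^sup>2 * N"
  have bound: "mass (u r) * integral {0..L} (\<lambda>x. cutoff'' L x * neg_cube (u r x)
      - cutoff L x * (6 * max 0 (- u r x)) * (ux r x)\<^sup>2) \<le> N * B" if "0 < r" "r \<le> s" for r
    unfolding B_def using that mass_nonneg[of r] N[of r] C[of r]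
    by (intro cutoff_neg_cube_rate_le L) auto
  have "(LINT x:{0..L}|lborel. cutoff L x * neg_cube (u s x))
      \<le> (LINT x:{0..L}|lborel. cutoff L x * neg_cube (u 0 x)) + s * (N * B)"
  proof -
    have "\<exists>K. K-lipschitz_on {-C'..C'} neg_cube" for C' using lipschitz_on_neg_cube by blast
    with L continuous_on_mult_left[OF continuous_on_max[OF continuous_on_const
        continuous_on_minus[OF continuous_on_id]], of UNIV 6 0]
    show ?thesis
      by (intro weak_increment_le[OF s L has_real_derivative_cutoff has_real_derivative_cutoff'
          continuous_on_cutoff(3) cutoff_at_end has_real_derivative_neg_cube _ _ _ _ bound])
        (auto simp: neg_cube_def)
  qed
  moreover have "(LINT x:{0..L}|lborel. cutoff L x * neg_cube (u 0 x)) = 0"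
    unfolding set_lebesgue_integral_def
    by (rule integral_eq_zero_AE, use uin_nonneg in eventually_elim)
      (auto simp: indicator_def initial neg_cube_eq_0_iff)
  moreover have "integral {0..L} (\<lambda>x. cutoff L x * neg_cube (u s x))
      = (LINT x:{0..L}|lborel. cutoff L x * neg_cube (u s x))"
    using continuous_on_u[OF s]
    by (intro integral_Icc_eq_set_integral continuous_intros continuous_on_compose2[OF continuous_on_neg_cube]) auto
  ultimately show ?thesis using L by (simp add: B_def field_simps)
qed

lemma nonneg_if_mass_nonneg:
  assumes s: "0 < s" and mass_nonneg: "\<And>r. r \<in> {0..s} \<Longrightarrow> 0 \<le> mass (u r)"
    and uin_nonneg: "AE x in lborel. x \<in> {0..} \<longrightarrow> 0 \<le> uin x" and "0 \<le> x"
  shows "0 \<le> u s x"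
proof -
  obtain C N where C: "\<And>r x. r \<in> {0..s} \<Longrightarrow> 0 \<le> x \<Longrightarrow> \<bar>u r x\<bar> \<le> C"
    and N: "\<And>r. r \<in> {0..s} \<Longrightarrow> L1_norm r \<le> N" "\<And>r. r \<in> {0..s} \<Longrightarrow> \<bar>mass (u r)\<bar> \<le> N"
    using uniform_bounds[of s] s by (metis less_imp_le)
  have "neg_cube (u s x) = 0"
  proof (rule vanishes_if_cutoff_integrals_small[where g = "\<lambda>x. neg_cube (u s x)"])
    show "continuous_on {0..} (\<lambda>x. neg_cube (u s x))"
      using continuous_on_time_slice[OF cont_u s] by (intro continuous_on_compose2[OF continuous_on_neg_cube]) auto
    show "integral {0..L} (\<lambda>x. cutoff L x * neg_cube (u s x)) \<le> s * N * (90 * C\<^sup>2 * N) / L\<^sup>2"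
      if "0 < L" for L
      using cutoff_neg_cube_integral_le[OF s that mass_nonneg uin_nonneg C N] .
  qed (use neg_cube_nonneg \<open>0 \<le> x\<close> in auto)
  then show ?thesis by (simp add: neg_cube_eq_0_iff)
qed

section \<open>The first moment of nonnegative solutions\<close>

lemma cutoff_moment_rate_le:
  assumes "0 < r" "0 < L" "\<bar>mass (u r)\<bar> \<le> N" "L1_norm r \<le> N"
  shows "\<bar>mass (u r) * integral {0..L} (\<lambda>x. (2 * cutoff' L x + x * cutoff'' L x) * u r x)\<bar>
           \<le> N * (42 / L * N)"
proof -
  have "\<bar>integral {0..L} (\<lambda>x. (2 * cutoff' L x + x * cutoff'' L x) * u r x)\<bar> \<le> 42 / L * L1_norm r"
    using moment_cutoff''_bound assms by (intro abs_integral_weighted_le continuous_intros) auto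
  also have "\<dots> \<le> 42 / L * N" using assms by (intro mult_left_mono) auto
  finally show ?thesis unfolding abs_mult using assms(3) by (intro mult_mono) auto
qed

lemma cutoff_moment_increment_le:
  assumes s: "0 < s" and L: "0 < L"
    and N: "\<And>r. r \<in> {0..s} \<Longrightarrow> L1_norm r \<le> N" "\<And>r. r \<in> {0..s} \<Longrightarrow> \<bar>mass (u r)\<bar> \<le> N"
  shows "\<bar>(LINT x:{0..L}|lborel. cutoff L x * (x * u s x)) - (LINT x:{0..L}|lborel. cutoff L x * (x * u 0 x))\<bar>
           \<le> s * N * (42 * N) / L"
proof -
  define \<phi>'' where "\<phi>'' x = 2 * cutoff' L x + x * cutoff'' L x" for x
  have \<phi>: "((\<lambda>x. x * cutoff L x) has_real_derivative cutoff L x + x * cutoff' L x) (at x)"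
    "((\<lambda>x. cutoff L x + x * cutoff' L x) has_real_derivative \<phi>'' x) (at x)" for x
    unfolding \<phi>''_def
    by (auto intro!: derivative_eq_intros has_real_derivative_cutoff has_real_derivative_cutoff')
  have cont: "continuous_on {0..L} \<phi>''" unfolding \<phi>''_def by (intro continuous_intros)
  have bound: "mass (u r) * integral {0..L} (\<lambda>x. \<phi>'' x * (c * u r x) - x * cutoff L x * 0 * (ux r x)\<^sup>2)
      \<le> N * (42 / L * N)" if "\<bar>c\<bar> = 1" "0 < r" "r \<le> s" for c r
  proof -
    have "integral {0..L} (\<lambda>x. \<phi>'' x * (c * u r x) - x * cutoff L x * 0 * (ux r x)\<^sup>2)
        = c * integral {0..L} (\<lambda>x. \<phi>'' x * u r x)"
      by (simp add: mult.left_commute[of _ c])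
    moreover have "c * (mass (u r) * integral {0..L} (\<lambda>x. \<phi>'' x * u r x)) \<le> N * (42 / L * N)"
      using abs_ge_self[of "c * (mass (u r) * integral {0..L} (\<lambda>x. \<phi>'' x * u r x))"] that
        cutoff_moment_rate_le[OF that(2) L N(2)[of r] N(1)[of r]]
      by (simp add: abs_mult \<phi>''_def)
    ultimately show ?thesis by (simp add: mult.left_commute)
  qed
  have incr: "(LINT x:{0..L}|lborel. x * cutoff L x * (c * u s x))
      \<le> (LINT x:{0..L}|lborel. x * cutoff L x * (c * u 0 x)) + s * (N * (42 / L * N))" if "\<bar>c\<bar> = 1" for c
  proof -
    have H: "((\<lambda>v. c * v) has_real_derivative c) (at y)" "((\<lambda>_. c) has_real_derivative 0) (at y)" for y
      by (auto intro!: derivative_eq_intros)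
    have lip: "\<exists>K. K-lipschitz_on {-C..C} (\<lambda>v. c * v)" for C
      using lipschitz_on_cmult_real[OF lipschitz_on_id] by blast
    show ?thesis
      using L by (intro weak_increment_le[OF s L \<phi> cont _ _ H continuous_on_const _ _ lip bound[OF that]])
        (auto simp: cutoff_at_end)
  qed
  have neg: "(LINT x:{0..L}|lborel. - (x * cutoff L x * u r x)) = - (LINT x:{0..L}|lborel. x * cutoff L x * u r x)"
    for r by (simp add: set_lebesgue_integral_def)
  have up: "(LINT x:{0..L}|lborel. x * cutoff L x * u s x)
      \<le> (LINT x:{0..L}|lborel. x * cutoff L x * u 0 x) + s * (N * (42 / L * N))"
    using incr[of 1] by simp
  have down: "- (LINT x:{0..L}|lborel. x * cutoff L x * u s x)
      \<le> - (LINT x:{0..L}|lborel. x * cutoff L x * u 0 x) + s * (N * (42 / L * N))"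
    using incr[of "-1"] by (simp add: neg)
  have "(LINT x:{0..L}|lborel. cutoff L x * (x * u r x)) = (LINT x:{0..L}|lborel. x * cutoff L x * u r x)"
    for r by (simp add: mult_ac)
  moreover have "s * (N * (42 / L * N)) = s * N * (42 * N) / L" by simp
  ultimately show ?thesis using up down by (simp add: abs_le_iff)
qed

lemma first_moment_conserved_if_nonneg:
  assumes s: "0 < s" and nonneg: "\<And>x. 0 \<le> x \<Longrightarrow> 0 \<le> u s x"
    and moment: "set_integrable lborel {0..} (\<lambda>x. x * uin x)"
  shows "set_integrable lborel {0..} (\<lambda>x. x * u s x)"
    and "(LINT x:{0..}|lborel. x * u s x) = (LINT x:{0..}|lborel. x * uin x)"
proof -
  obtain N where N: "\<And>r. r \<in> {0..s} \<Longrightarrow> L1_norm r \<le> N" "\<And>r. r \<in> {0..s} \<Longrightarrow> \<bar>mass (u r)\<bar> \<le> N"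
    using uniform_bounds[of s] s by (metis less_imp_le)
  define J where "J r n = (LINT x:{0..real (Suc n)}|lborel. cutoff (real (Suc n)) x * (x * u r x))" for r n
  have moment_0: "set_integrable lborel {0..} (\<lambda>x. x * u 0 x)"
    using moment by (subst set_integrable_cong[OF refl refl]) (auto simp: initial)
  have J_0: "(\<lambda>n. J 0 n) \<longlonglongrightarrow> (LINT x:{0..}|lborel. x * u 0 x)"
    unfolding J_def by (rule cutoff_set_integral_tendsto[OF moment_0])
  have "(\<lambda>n. J s n - J 0 n) \<longlonglongrightarrow> 0"
  proof (rule Lim_null_comparison)
    show "\<forall>\<^sub>F n in sequentially. norm (J s n - J 0 n) \<le> s * N * (42 * N) / real (Suc n)"
      unfolding J_def using cutoff_moment_increment_le[OF s _ N] by simp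
    show "(\<lambda>n. s * N * (42 * N) / real (Suc n)) \<longlonglongrightarrow> 0"
      using LIMSEQ_Suc[OF lim_const_over_n] by simp
  qed
  from tendsto_add[OF this J_0] have "(\<lambda>n. J s n) \<longlonglongrightarrow> (LINT x:{0..}|lborel. x * u 0 x)"
    by simp
  moreover have "continuous_on {0..} (\<lambda>x. x * u s x)"
    using continuous_on_time_slice[OF cont_u s] by (intro continuous_intros)
  ultimately have "set_integrable lborel {0..} (\<lambda>x. x * u s x)"
    and "(LINT x:{0..}|lborel. x * u s x) = (LINT x:{0..}|lborel. x * u 0 x)"
    using cutoff_set_integral_monotone[of "\<lambda>x. x * u s x"] nonneg unfolding J_def by auto
  moreover have "(LINT x:{0..}|lborel. x * u 0 x) = (LINT x:{0..}|lborel. x * uin x)"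
    by (rule set_lebesgue_integral_cong) (auto simp: initial)
  ultimately show "set_integrable lborel {0..} (\<lambda>x. x * u s x)"
    and "(LINT x:{0..}|lborel. x * u s x) = (LINT x:{0..}|lborel. x * uin x)" by simp_all
qed

section \<open>Solutions with zero initial data\<close>

definition sine_transform :: "real \<Rightarrow> real \<Rightarrow> real" where
  "sine_transform k s = (LINT x:{0..}|lborel. sin (k * x) * u s x)"

lemma set_integrable_sine:
  assumes "0 \<le> s"
  shows "set_integrable lborel {0..} (\<lambda>x. sin (k * x) * u s x)"
proof (rule set_integrable_bound[OF integrable[OF assms]])
  have "(\<lambda>x. sin (k * x) * (indicator {0..} x *\<^sub>R u s x)) \<in> borel_measurable lborel"
    using integrable[OF assms] unfolding set_integrable_def by measurable
  then show "set_borel_measurable lborel {0..} (\<lambda>x. sin (k * x) * u s x)"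
    unfolding set_borel_measurable_def by (simp add: mult.left_commute)
  show "AE x in lborel. x \<in> {0..} \<longrightarrow> norm (sin (k * x) * u s x) \<le> norm (u s x)"
    by (auto simp: abs_mult intro!: mult_left_le_one_le)
qed

lemma continuous_on_sine_transform: "continuous_on {0..} (sine_transform k)"
proof (rule continuous_on_if_L1_lipschitz[where K = 1])
  fix r s :: real assume "r \<in> {0..}" "s \<in> {0..}"
  then have int: "set_integrable lborel {0..} (\<lambda>x. sin (k * x) * u q x)" "set_integrable lborel {0..} (u q)"
    if "q \<in> {r, s}" for q using that by (auto intro!: set_integrable_sine integrable)
  have diff: "set_integrable lborel {0..} (\<lambda>x. sin (k * x) * (u r x - u s x))"
    using int by (simp add: right_diff_distrib set_integral_diff(1))
  have "\<bar>sine_transform k r - sine_transform k s\<bar> = \<bar>LINT x:{0..}|lborel. sin (k * x) * (u r x - u s x)\<bar>"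
    unfolding sine_transform_def using int by (simp add: set_integral_diff(2) right_diff_distrib)
  also have "\<dots> \<le> (LINT x:{0..}|lborel. \<bar>sin (k * x) * (u r x - u s x)\<bar>)"
    using set_integral_norm_bound[OF diff] by simp
  also have "\<dots> \<le> L1_dist r s" unfolding L1_dist_def
  proof (rule set_integral_mono)
    show "\<bar>sin (k * x) * (u r x - u s x)\<bar> \<le> \<bar>u r x - u s x\<bar>" for x
      by (simp add: abs_mult mult_left_le_one_le)
  qed (use diff int in \<open>auto intro!: set_integrable_abs set_integral_diff(1)\<close>)
  finally show "\<bar>sine_transform k r - sine_transform k s\<bar> \<le> 1 * L1_dist r s" by simp
qed auto

lemma sine_cutoff_integral_tendsto:
  assumes "0 < r"
  shows "(\<lambda>n. integral {0..real (Suc n)} (\<lambda>x. sine_cutoff k (real (Suc n)) x * u r x))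
           \<longlonglongrightarrow> sine_transform k r"
proof -
  have "integral {0..L} (\<lambda>x. sine_cutoff k L x * u r x) = (LINT x:{0..L}|lborel. cutoff L x * (sin (k * x) * u r x))"
    for L using continuous_on_u[OF assms]
    by (subst integral_Icc_eq_set_integral) (auto intro!: continuous_intros simp: sine_cutoff_def mult_ac)
  then show ?thesis
    using cutoff_set_integral_tendsto[OF set_integrable_sine[of r k]] assms
    by (simp add: sine_transform_def)
qed

lemma sine_cutoff''_integral_tendsto:
  assumes r: "0 < r"
  shows "(\<lambda>n. integral {0..real (Suc n)} (\<lambda>x. sine_cutoff'' k (real (Suc n)) x * u r x))
           \<longlonglongrightarrow> - k\<^sup>2 * sine_transform k r"
proof -
  define L where "L n = real (Suc n)" for n
  define S where "S n = integral {0..L n} (\<lambda>x. sine_cutoff k (L n) x * u r x)" for n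
  define V where "V n = integral {0..L n} (\<lambda>x. sine_cutoff'' k (L n) x * u r x)" for n
  have "V n + k\<^sup>2 * S n = integral {0..L n} (\<lambda>x. (sine_cutoff'' k (L n) x + k\<^sup>2 * sine_cutoff k (L n) x) * u r x)"
    for n using continuous_on_u[OF r]
    by (simp add: V_def S_def distrib_right mult.assoc integral_add integrable_continuous_interval
        continuous_intros)
  then have "\<bar>V n + k\<^sup>2 * S n\<bar> \<le> (12 * \<bar>k\<bar> + 30) / L n * L1_norm r" for n
    using sine_cutoff_bounds(1)[of _ "L n" k] r
    by (simp only:) (rule abs_integral_weighted_le; auto intro!: continuous_intros simp: L_def)
  then have "\<forall>n. norm (V n + k\<^sup>2 * S n) \<le> (12 * \<bar>k\<bar> + 30) / L n * L1_norm r" by simp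
  moreover have "(\<lambda>n. (12 * \<bar>k\<bar> + 30) / L n * L1_norm r) \<longlonglongrightarrow> 0"
    using LIMSEQ_Suc[OF lim_const_over_n[of "(12 * \<bar>k\<bar> + 30) * L1_norm r"]] by (simp add: L_def)
  ultimately have "(\<lambda>n. V n + k\<^sup>2 * S n) \<longlonglongrightarrow> 0"
    by (rule Lim_null_comparison[OF always_eventually])
  moreover have "(\<lambda>n. k\<^sup>2 * S n) \<longlonglongrightarrow> k\<^sup>2 * sine_transform k r"
    unfolding S_def L_def by (intro tendsto_mult_left sine_cutoff_integral_tendsto r)
  ultimately have "(\<lambda>n. (V n + k\<^sup>2 * S n) - k\<^sup>2 * S n) \<longlonglongrightarrow> 0 - k\<^sup>2 * sine_transform k r"
    by (rule tendsto_diff)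
  then show ?thesis by (simp add: V_def L_def)
qed

lemma sine_transform_increment:
  assumes ab: "0 < a" "a \<le> b"
  shows "sine_transform k b - sine_transform k a
           = integral {a..b} (\<lambda>r. mass (u r) * (- k\<^sup>2 * sine_transform k r))"
proof -
  obtain N where N: "\<And>r. r \<in> {0..b} \<Longrightarrow> L1_norm r \<le> N" "\<And>r. r \<in> {0..b} \<Longrightarrow> \<bar>mass (u r)\<bar> \<le> N"
    using uniform_bounds[of b] ab by (metis order.trans less_imp_le)
  define L where "L n = real (Suc n)" for n
  define S where "S n q = integral {0..L n} (\<lambda>x. sine_cutoff k (L n) x * u q x)" for n q
  define V where "V n r = integral {0..L n} (\<lambda>x. sine_cutoff'' k (L n) x * u r x)" for n r
  define K where "K = k\<^sup>2 + 12 * \<bar>k\<bar> + 30"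
  have L: "0 < L n" "1 \<le> L n" for n by (auto simp: L_def)
  have H: "((\<lambda>v. v) has_real_derivative 1) (at y)" "((\<lambda>_. 1) has_real_derivative 0) (at y)" for y :: real
    by (auto intro!: derivative_eq_intros)
  have weak: "(\<lambda>r. mass (u r) * V n r) integrable_on {a..b}"
    "S n b - S n a = integral {a..b} (\<lambda>r. mass (u r) * V n r)" for n
    using weak_identity[OF ab less_imp_le[OF L(1)] has_field_derivative_at_within[OF has_real_derivative_sine_cutoff(1)]
        has_field_derivative_at_within[OF has_real_derivative_sine_cutoff(2)] continuous_on_sine_cutoff(2)
        sine_cutoff_at_ends(2,3) H continuous_on_const, of n k] L(1)[of n]
    by (simp_all add: S_def V_def sine_cutoff_at_ends(1))
  have "(\<lambda>n. integral {a..b} (\<lambda>r. mass (u r) * V n r))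
      \<longlonglongrightarrow> integral {a..b} (\<lambda>r. mass (u r) * (- k\<^sup>2 * sine_transform k r))"
  proof (rule Equivalence_Lebesgue_Henstock_Integration.dominated_convergence(2)[OF weak(1)])
    show "(\<lambda>_. N * (K * N)) integrable_on {a..b}" by (rule integrable_const_ivl)
    fix n r assume r: "r \<in> {a..b}"
    then have "\<bar>V n r\<bar> \<le> K * L1_norm r"
      unfolding V_def K_def using ab L(2)[of n] less_imp_le[OF L(1)] sine_cutoff_bounds(2)
      by (intro abs_integral_weighted_le continuous_intros) auto
    also have "\<dots> \<le> K * N" using N(1)[of r] r ab by (intro mult_left_mono) (auto simp: K_def)
    finally show "norm (mass (u r) * V n r) \<le> N * (K * N)"
      unfolding real_norm_def abs_mult using N(2)[of r] r ab by (intro mult_mono) auto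
  next
    fix r assume "r \<in> {a..b}"
    then show "(\<lambda>n. mass (u r) * V n r) \<longlonglongrightarrow> mass (u r) * (- k\<^sup>2 * sine_transform k r)"
      using ab unfolding V_def L_def by (intro tendsto_mult_left sine_cutoff''_integral_tendsto) auto
  qed
  moreover have "(\<lambda>n. S n b - S n a) \<longlonglongrightarrow> sine_transform k b - sine_transform k a"
    unfolding S_def L_def using ab by (intro tendsto_diff sine_cutoff_integral_tendsto) auto
  ultimately show ?thesis by (simp add: weak(2) LIMSEQ_unique)
qed

lemma sine_transform_eq_zero_if_zero_data:
  assumes zero: "AE x in lborel. x \<in> {0..} \<longrightarrow> uin x = 0" and "0 \<le> t"
  shows "sine_transform k t = 0"
proof -
  define m where "m r = mass (u r)" for r
  define g where "g = sine_transform k"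
  have cont: "continuous_on {0..b} m" "continuous_on {0..b} g" for b
    unfolding m_def g_def
    by (rule continuous_on_subset[OF continuous_on_mass], auto,
        rule continuous_on_subset[OF continuous_on_sine_transform], auto)
  have g0: "g 0 = 0"
    unfolding g_def sine_transform_def set_lebesgue_integral_def
    by (rule integral_eq_zero_AE, use zero in eventually_elim) (auto simp: indicator_def initial)
  have "g b = - k\<^sup>2 * integral {0..b} (\<lambda>r. m r * g r)" if b: "b \<in> {0..t}" for b
  proof (cases "b = 0")
    case False
    then have "0 < b" using b by auto
    define I where "I a = - k\<^sup>2 * integral {a..b} (\<lambda>r. m r * g r)" for a
    have "g b - g a = I a" if "0 < a" "a \<le> b" for a
    proof -
      have "integral {a..b} (\<lambda>r. mass (u r) * (- k\<^sup>2 * sine_transform k r)) = I a"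
        unfolding I_def m_def g_def by (subst integral_mult_right[symmetric]) (simp add: algebra_simps)
      then show ?thesis using sine_transform_increment[OF that, of k] by (simp add: g_def)
    qed
    moreover have "continuous_on {0..b} I" "continuous_on {0..b} (\<lambda>a. g b - g a)"
      unfolding I_def using cont
      by (auto intro!: continuous_intros indefinite_integral_continuous_1' integrable_continuous_interval)
    ultimately have "g b - g 0 = I 0"
      using le_at_left_endpoint[of 0 b "\<lambda>a. g b - g a" I] le_at_left_endpoint[of 0 b I "\<lambda>a. g b - g a"]
        \<open>0 < b\<close> by force
    then show ?thesis by (simp add: g0 I_def)
  qed (simp add: g0)
  from vanishes_if_linear_integral_equation[OF \<open>0 \<le> t\<close> cont this] show ?thesis by (simp add: g_def)
qed

lemma AE_zero_if_zero_data:
  assumes "AE x in lborel. x \<in> {0..} \<longrightarrow> uin x = 0" "0 \<le> t"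
  shows "AE x in lborel. x \<in> {0..} \<longrightarrow> u t x = 0"
  using integrable[OF assms(2)] sine_transform_eq_zero_if_zero_data[OF assms]
  by (intro AE_zero_if_sine_transform_zero) (auto simp: sine_transform_def)

section \<open>Conservation of the first moment\<close>

lemma initial_mass_pos:
  assumes uin_nonneg: "AE x in lborel. x \<in> {0..} \<longrightarrow> 0 \<le> uin x"
    and nonzero: "\<not> (AE x in lborel. x \<in> {0..} \<longrightarrow> uin x = 0)"
  shows "0 < mass (u 0)"
proof -
  have mass_0: "mass (u 0) = (LINT x:{0..}|lborel. uin x)"
    unfolding mass_def by (rule set_lebesgue_integral_cong) (auto simp: initial)
  have uin_int: "set_integrable lborel {0..} uin"
    using integrable[of 0] by (subst set_integrable_cong[OF refl refl]) (auto simp: initial)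
  have "0 \<le> mass (u 0)"
    unfolding mass_0 set_lebesgue_integral_def
    by (rule integral_nonneg_AE, use uin_nonneg in eventually_elim) (auto simp: indicator_def)
  moreover have "mass (u 0) \<noteq> 0"
    using AE_zero_if_set_integral_zero[OF uin_int uin_nonneg] nonzero mass_0 by auto
  ultimately show ?thesis by simp
qed

lemma mass_nonneg:
  assumes "0 \<le> t" and uin_nonneg: "AE x in lborel. x \<in> {0..} \<longrightarrow> 0 \<le> uin x"
    and moment: "set_integrable lborel {0..} (\<lambda>x. x * uin x)"
    and nonzero: "\<not> (AE x in lborel. x \<in> {0..} \<longrightarrow> uin x = 0)" and "r \<in> {0..t}"
  shows "0 \<le> mass (u r)"
proof (rule ccontr)
  assume "\<not> 0 \<le> mass (u r)"
  moreover have "continuous_on {0..t} (\<lambda>r. mass (u r))"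
    using continuous_on_mass by (rule continuous_on_subset) auto
  ultimately obtain r\<^sub>0 where r\<^sub>0: "0 < r\<^sub>0" "r\<^sub>0 \<le> t" "mass (u r\<^sub>0) = 0"
    "\<And>r. r \<in> {0..r\<^sub>0} \<Longrightarrow> 0 \<le> mass (u r)"
    using first_zero_before_negative[of t "\<lambda>r. mass (u r)" r] initial_mass_pos[OF uin_nonneg nonzero]
      \<open>r \<in> {0..t}\<close> by (metis not_le)
  have nonneg: "0 \<le> u r\<^sub>0 x" if "0 \<le> x" for x
    using nonneg_if_mass_nonneg[OF r\<^sub>0(1) r\<^sub>0(4) uin_nonneg that] .
  have "AE x in lborel. x \<in> {0..} \<longrightarrow> u r\<^sub>0 x = 0"
    using r\<^sub>0 nonneg by (intro AE_zero_if_set_integral_zero integrable) (auto simp: mass_def)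
  then have "AE x in lborel. indicator {0..} x *\<^sub>R (x * u r\<^sub>0 x) = 0"
    by eventually_elim (auto simp: indicator_def)
  then have "(LINT x:{0..}|lborel. x * u r\<^sub>0 x) = 0"
    unfolding set_lebesgue_integral_def by (rule integral_eq_zero_AE)
  then have "(LINT x:{0..}|lborel. x * uin x) = 0"
    using first_moment_conserved_if_nonneg(2)[OF r\<^sub>0(1) nonneg moment] by simp
  then show False using AE_zero_if_first_moment_zero[OF moment uin_nonneg] nonzero by simp
qed

lemma first_moment_eq_if_AE_eq_initial:
  assumes "0 \<le> t" "AE x in lborel. x \<in> {0..} \<longrightarrow> u t x = uin x"
    and moment: "set_integrable lborel {0..} (\<lambda>x. x * uin x)"
  shows "set_integrable lborel {0..} (\<lambda>x. x * u t x) \<and>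
         (LINT x:{0..}|lborel. x * u t x) = (LINT x:{0..}|lborel. x * uin x)"
proof -
  have "(\<lambda>x. x * (indicator {0..} x *\<^sub>R u t x)) \<in> borel_measurable lborel"
    using integrable[OF assms(1)] unfolding set_integrable_def by measurable
  then have meas: "(\<lambda>x. indicator {0..} x *\<^sub>R (x * u t x)) \<in> borel_measurable lborel"
    by (simp add: mult.left_commute)
  have meas_in: "(\<lambda>x. indicator {0..} x *\<^sub>R (x * uin x)) \<in> borel_measurable lborel"
    using moment unfolding set_integrable_def by blast
  have "AE x in lborel. indicator {0..} x *\<^sub>R (x * u t x) = indicator {0..} x *\<^sub>R (x * uin x)"
    using assms(2) by eventually_elim (auto simp: indicator_def)
  then show ?thesis
    using moment integrable_cong_AE[OF meas meas_in] integral_cong_AE[OF meas meas_in]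
    by (simp add: set_integrable_def set_lebesgue_integral_def)
qed

lemma first_moment_conserved:
  assumes "0 \<le> t" and uin_nonneg: "AE x in lborel. x \<in> {0..} \<longrightarrow> 0 \<le> uin x"
    and moment: "set_integrable lborel {0..} (\<lambda>x. x * uin x)"
  shows "set_integrable lborel {0..} (\<lambda>x. x * u t x) \<and>
         (LINT x:{0..}|lborel. x * u t x) = (LINT x:{0..}|lborel. x * uin x)"
proof (cases "t = 0 \<or> (AE x in lborel. x \<in> {0..} \<longrightarrow> uin x = 0)")
  case True
  have "AE x in lborel. x \<in> {0..} \<longrightarrow> u t x = uin x"
  proof (cases "t = 0")
    case False
    with True have zero: "AE x in lborel. x \<in> {0..} \<longrightarrow> uin x = 0" by simp
    with AE_zero_if_zero_data[OF zero \<open>0 \<le> t\<close>] show ?thesis by eventually_elim auto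
  qed (simp add: initial)
  then show ?thesis by (rule first_moment_eq_if_AE_eq_initial[OF \<open>0 \<le> t\<close> _ moment])
next
  case False
  then have "0 < t" using \<open>0 \<le> t\<close> by auto
  have "0 \<le> u t x" if "0 \<le> x" for x
    using False \<open>0 < t\<close> that
    by (intro nonneg_if_mass_nonneg mass_nonneg[OF \<open>0 \<le> t\<close> uin_nonneg moment] uin_nonneg) auto
  then show ?thesis using first_moment_conserved_if_nonneg[OF \<open>0 < t\<close> _ moment] by blast
qed

end

theorem mainTheorem3:
  fixes uin :: "real \<Rightarrow> real" and u :: "real \<Rightarrow> real \<Rightarrow> real"
  assumes L1: "set_integrable lborel {0..} uin"
    and Linf: "\<exists>C. AE x in lborel. x \<in> {0..} \<longrightarrow> \<bar>uin x\<bar> \<le> C"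
    and nonneg: "AE x in lborel. x \<in> {0..} \<longrightarrow> uin x \<ge> 0"
    and moment: "set_integrable lborel {0..} (\<lambda>x. x * uin x)"
    and sol: "strong_solution uin u"
    and t: "t \<ge> 0"
  shows "set_integrable lborel {0..} (\<lambda>x. x * u t x) \<and>
         (LINT x:{0..}|lborel. x * u t x) = (LINT x:{0..}|lborel. x * uin x)"
proof -
  obtain ut ux uxx where "L1_solution u ut ux uxx uin"
    using sol by (rule strong_solutionE)
  then interpret L1_solution u ut ux uxx uin .
  show ?thesis using first_moment_conserved[OF t nonneg moment] .
qed

end
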